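(* Let $m<\infty$ and $m_1,\dots,m_m<\infty$. For each $i\in\{1,\dots,m\}$ and $j\in\{1,\dots,m_i\}$ let $(\mathbf X_i,\mathbf Y_{ij})$ be a general correlated source with $n$-th distribution $P_{X_i^n}(x^n)P_{Y_{ij}^n|X_i^n}(y^n|x^n)$ (so all components with the same $i$ share the marginal $\mathbf X_i$). Let $\alpha_{ij}>0$ with $\sum_{i,j}\alpha_{ij}=1$, $\alpha_i=\sum_j\alpha_{ij}$, $\alpha_{j|i}=\alpha_{ij}/\alpha_i$, and let $(\mathbf X,\mathbf Y)$ be the mixture \[P_{X^nY^n}(x^n,y^n)=\sum_{i=1}^m\sum_{j=1}^{m_i}\alpha_{ij}P_{X_i^n}(x^n)P_{Y_{ij}^n|X_i^n}(y^n|x^n)=\sum_{i=1}^m\alpha_iP_{X_i^n}(x^n)\Big[\sum_{j=1}^{m_i}\alpha_{j|i}P_{Y_{ij}^n|X_i^n}(y^n|x^n)\Big].\] Assume every $(\mathbf X_i,\mathbf Y_{ij})$ is uniformly integrable and satisfies the conditional strong converse property, and that $\underline D(\mathbf X_i\Vert\mathbf X_k)>0$ for all $i\ne k$. Then \[\overline H_s(\mathbf X|\mathbf Y)=\sum_{i=1}^m\alpha_i\Big[\max_{j=1,\dots,m_i}H(\mathbf X_i|\mathbf Y_{ij})\Big],\] where $H(\mathbf X_i|\mathbf Y_{ij})=\lim_{n\to\infty}\frac1nH(X_i^n|Y_{ij}^n)$.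
   Context: A general correlated source $\{(X^n,Y^n)\}_{n\ge1}$ is an arbitrary sequence of pairs of random variables on $\mathcal X^n\times\mathcal Y^n$, $\mathcal X,\mathcal Y$ finite or countably infinite (no structural assumptions; marginal probabilities positive). Logs base 2. With $Z_n=\frac1n\log\frac1{P_{X^n|Y^n}(X^n|Y^n)}$: the source is uniformly integrable if $\lim_{u\to\infty}\sup_n\sum_{z:|z|\ge u}P_{Z_n}(z)|z|=0$; it satisfies the conditional strong converse property if $\inf\{\alpha:\lim_n\Pr\{Z_n>\alpha\}=0\}=\sup\{\beta:\lim_n\Pr\{Z_n<\beta\}=0\}$ (for such uniformly integrable sources the limit $\lim_n\frac1nH(X^n|Y^n)$ exists). $\underline D(\mathbf X_i\Vert\mathbf X_k)=\sup\{\beta:\lim_n\Pr\{\frac1n\log\frac{P_{X_i^n}(X_i^n)}{P_{X_k^n}(X_i^n)}<\beta\}=0\}$ with $X_i^n\sim P_{X_i^n}$. For a source with distributions $P_{X^nY^n}$, $x^n$ and $\varepsilon\in(0,1]$: $\overline h^\varepsilon(x^n)=\inf\{a\in\mathbb R:\sum_{y^n:\log(1/P_{X^n|Y^n}(x^n|y^n))>a}P_{Y^n|X^n}(y^n|x^n)\le\varepsilon\}$; $\overline H_s^\varepsilon(X^n|Y^n)=\sum_{x^n}P_{X^n}(x^n)\overline h^\varepsilon(x^n)$; $\overline H_s(\mathbf X|\mathbf Y)=\lim_{\varepsilon\downarrow0}\limsup_n\frac1n\overline H_s^\varepsilon(X^n|Y^n)$. *)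

theory Defs
  imports "HOL-Probability.Probability"
begin

text \<open>A general correlated source is a sequence S :: nat => ('a list * 'b list) pmf;
  S n is the n-th distribution P_{X^n Y^n} (supported on pairs of length-n lists).\<close>

definition condXY :: "('a \<times> 'b) pmf \<Rightarrow> 'a \<Rightarrow> 'b \<Rightarrow> real" where
  "condXY P x y = pmf P (x, y) / pmf (map_pmf snd P) y"

definition Zfun :: "(nat \<Rightarrow> ('a \<times> 'b) pmf) \<Rightarrow> nat \<Rightarrow> ('a \<times> 'b) \<Rightarrow> real" where
  "Zfun S n p = (1 / real n) * log 2 (1 / condXY (S n) (fst p) (snd p))"

definition src_uniformly_integrable :: "(nat \<Rightarrow> ('a \<times> 'b) pmf) \<Rightarrow> bool" where
  "src_uniformly_integrable S \<longleftrightarrow>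
     ((\<lambda>u::real. \<Squnion>n\<in>{1..}. \<integral>\<^sup>+ p. ennreal (if \<bar>Zfun S n p\<bar> \<ge> u then \<bar>Zfun S n p\<bar> else 0)
          \<partial>measure_pmf (S n)) \<longlongrightarrow> 0) at_top"

definition cond_strong_converse :: "(nat \<Rightarrow> ('a \<times> 'b) pmf) \<Rightarrow> bool" where
  "cond_strong_converse S \<longleftrightarrow>
     Inf (ereal ` {a. (\<lambda>n. measure_pmf.prob (S n) {p. Zfun S n p > a}) \<longlonglongrightarrow> 0})
   = Sup (ereal ` {b. (\<lambda>n. measure_pmf.prob (S n) {p. Zfun S n p < b}) \<longlonglongrightarrow> 0})"

definition cond_entropy_n :: "(nat \<Rightarrow> ('a \<times> 'b) pmf) \<Rightarrow> nat \<Rightarrow> real" where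
  "cond_entropy_n S n =
     measure_pmf.expectation (S n) (\<lambda>p. log 2 (1 / condXY (S n) (fst p) (snd p)))"

definition cond_entropy_rate :: "(nat \<Rightarrow> ('a \<times> 'b) pmf) \<Rightarrow> real" where
  "cond_entropy_rate S = lim (\<lambda>n. cond_entropy_n S n / real n)"

definition D_lower :: "(nat \<Rightarrow> 'a pmf) \<Rightarrow> (nat \<Rightarrow> 'a pmf) \<Rightarrow> ereal" where
  "D_lower PI PK = Sup (ereal ` {b. (\<lambda>n. measure_pmf.prob (PI n)
        {x. (1 / real n) * log 2 (pmf (PI n) x / pmf (PK n) x) < b}) \<longlonglongrightarrow> 0})"

text \<open>hbar^eps(x^n): the sum over y of P_{Y|X}(y|x) on the set where log(1/P_{X|Y}(x|y)) > a
  is written as P_{XY}({x} x {y. ...}) / P_X(x).\<close>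
definition hbar :: "('a \<times> 'b) pmf \<Rightarrow> real \<Rightarrow> 'a \<Rightarrow> real" where
  "hbar P \<epsilon> x = Inf {a. measure_pmf.prob P {p. fst p = x \<and> log 2 (1 / condXY P (fst p) (snd p)) > a}
                          / pmf (map_pmf fst P) x \<le> \<epsilon>}"

definition Hs_eps :: "(nat \<Rightarrow> ('a \<times> 'b) pmf) \<Rightarrow> real \<Rightarrow> nat \<Rightarrow> ennreal" where
  "Hs_eps S \<epsilon> n = (\<integral>\<^sup>+ x. ennreal (hbar (S n) \<epsilon> x) \<partial>measure_pmf (map_pmf fst (S n)))"

definition Hs_bar :: "(nat \<Rightarrow> ('a \<times> 'b) pmf) \<Rightarrow> ennreal" where
  "Hs_bar S = Lim (at_right 0) (\<lambda>\<epsilon>::real. limsup (\<lambda>n. ennreal (1 / real n) * Hs_eps S \<epsilon> n))"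

definition joint_src :: "(nat \<Rightarrow> 'a pmf) \<Rightarrow> (nat \<Rightarrow> 'a \<Rightarrow> 'b pmf) \<Rightarrow> nat \<Rightarrow> ('a \<times> 'b) pmf" where
  "joint_src PX W n = bind_pmf (PX n) (\<lambda>x. map_pmf (Pair x) (W n x))"

end

theory Submission
  imports Defs
begin

text \<open>
  Let L(x, y) = log (1 / P(x | y)) be the conditional self-information of the mixture at block
  length n, so that \<open>hbar \<epsilon> x\<close> is the upper \<epsilon>-quantile of L(x, \<cdot>) under P(\<cdot> | x).
  Positive divergence rates give \<delta> > 0 such that a typical x of X_i is dominated by i, i.e.
  P_i(x) \<ge> 2^(n\<delta>) P_k(x) for all k \<noteq> i. For such x and every component (i, j), L exceeds the
  self-information of the component by less than log (1 / \<alpha>_ij) + n\<gamma> and falls below it by less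
  than n\<gamma>, except on events of probability at most 2^(-n\<gamma>). The component attaining
  H_i = max_j H(X_i | Y_ij) has weight above 2\<epsilon> and concentrates at H_i, which forces
  \<open>hbar \<epsilon> x \<ge> n (H_i - \<gamma>)\<close>; every component puts conditional mass at most \<epsilon>/2 above
  n (H_i + \<gamma>), which forces \<open>hbar \<epsilon> x \<le> n (H_i + \<gamma>)\<close>. Averaging over x gives \<Sum>_i \<alpha>_i H_i.
  The atypical x contribute o(n): by Markov's inequality \<epsilon> P(x) \<open>hbar \<epsilon> x\<close> is at most the
  expectation of L on {X = x}, and the sources are uniformly integrable.
\<close>

section \<open>Conditional probabilities of a distribution on pairs\<close>

lemma nn_integral_indicator_singleton_pmf:
  "(\<integral>\<^sup>+x'. indicator {x} x' * f x' \<partial>measure_pmf p) = ennreal (pmf p x) * (f x :: ennreal)"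
proof -
  have "(\<integral>\<^sup>+x'. indicator {x} x' * f x' \<partial>measure_pmf p) =
     (\<integral>\<^sup>+x'. (ennreal (pmf p x') * f x') * indicator {x} x' \<partial>count_space UNIV)"
    by (simp add: nn_integral_measure_pmf mult_ac)
  then show ?thesis by simp
qed

lemma ennreal_pmf_map_snd_eq:
  "ennreal (pmf (map_pmf snd P) y) = (\<integral>\<^sup>+x. ennreal (pmf P (x, y)) \<partial>count_space UNIV)"
proof -
  have "ennreal (pmf (map_pmf snd P) y) =
      (\<integral>\<^sup>+p. ennreal (pmf P p) * indicator (snd -` {y}) p \<partial>count_space UNIV)"
    by (simp add: ennreal_pmf_map nn_integral_measure_pmf)
  also have "\<dots> = (\<integral>\<^sup>+x. \<integral>\<^sup>+y'. ennreal (pmf P (x, y')) * indicator {y} y' \<partial>count_space UNIV \<partial>count_space UNIV)"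
    by (subst nn_integral_fst_count_space[symmetric]) (simp add: indicator_def)
  finally show ?thesis by simp
qed

lemma pmf_le_pmf_map_snd: "pmf P (x, y) \<le> pmf (map_pmf snd P) y"
proof -
  have "pmf P (x, y) = measure_pmf.prob P {(x, y)}" by (simp add: measure_pmf_single)
  also have "\<dots> \<le> measure_pmf.prob P (snd -` {y})"
    by (rule measure_pmf.finite_measure_mono) auto
  finally show ?thesis by (simp add: pmf_map)
qed

lemma condXY_nonneg: "0 \<le> condXY P x y"
  by (simp add: condXY_def)

lemma condXY_le_1: "condXY P x y \<le> 1"
  using pmf_le_pmf_map_snd[of P x y] pmf_nonneg[of "map_pmf snd P" y]
  by (auto simp: condXY_def divide_le_eq_1 less_le)

lemma condXY_pos: "pmf P (x, y) > 0 \<Longrightarrow> condXY P x y > 0"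
  using pmf_le_pmf_map_snd[of P x y] by (simp add: condXY_def)

lemma pmf_eq_pmf_map_snd_mult_condXY: "pmf P (x, y) = pmf (map_pmf snd P) y * condXY P x y"
  using pmf_le_pmf_map_snd[of P x y] pmf_nonneg[of P "(x, y)"] by (auto simp: condXY_def)

lemma nn_integral_condXY_le_1: "(\<integral>\<^sup>+x. ennreal (condXY P x y) \<partial>count_space UNIV) \<le> 1"
proof (cases "pmf (map_pmf snd P) y = 0")
  case True
  then show ?thesis by (simp add: condXY_def)
next
  case False
  then have pos: "pmf (map_pmf snd P) y > 0" by (simp add: less_le)
  have "(\<integral>\<^sup>+x. ennreal (condXY P x y) \<partial>count_space UNIV) =
      (\<integral>\<^sup>+x. ennreal (pmf P (x, y)) * ennreal (1 / pmf (map_pmf snd P) y) \<partial>count_space UNIV)"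
    by (simp add: condXY_def ennreal_mult[symmetric] divide_inverse)
  also have "\<dots> = ennreal (pmf (map_pmf snd P) y) * ennreal (1 / pmf (map_pmf snd P) y)"
    by (simp add: nn_integral_multc ennreal_pmf_map_snd_eq)
  also have "\<dots> = 1" using pos by (simp add: ennreal_mult[symmetric])
  finally show ?thesis by simp
qed

definition self_info :: "('a \<times> 'b) pmf \<Rightarrow> 'a \<times> 'b \<Rightarrow> real" where
  "self_info P p = log 2 (1 / condXY P (fst p) (snd p))"

lemma self_info_nonneg: "0 \<le> self_info P p"
  using condXY_nonneg[of P "fst p" "snd p"] condXY_le_1[of P "fst p" "snd p"]
  by (cases "condXY P (fst p) (snd p) = 0") (simp_all add: self_info_def log_def)

lemma self_info_pos_eq: "pmf P p > 0 \<Longrightarrow> self_info P p = - log 2 (condXY P (fst p) (snd p))"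
  using condXY_pos[of P "fst p" "snd p"] by (simp add: self_info_def log_divide)

lemma Zfun_eq_self_info: "Zfun S n p = (1 / real n) * self_info (S n) p"
  by (simp add: Zfun_def self_info_def)

lemma Zfun_nonneg: "0 \<le> Zfun S n p"
  by (simp add: Zfun_eq_self_info self_info_nonneg)

lemma cond_entropy_n_div_eq:
  assumes "n \<ge> 1"
  shows "cond_entropy_n S n / real n = enn2real (\<integral>\<^sup>+p. ennreal (Zfun S n p) \<partial>measure_pmf (S n))"
proof -
  have "cond_entropy_n S n = enn2real (\<integral>\<^sup>+p. ennreal (self_info (S n) p) \<partial>measure_pmf (S n))"
    unfolding cond_entropy_n_def self_info_def[symmetric]
    by (subst integral_eq_nn_integral) (auto simp: self_info_nonneg intro!: AE_I2)
  moreover have "ennreal (Zfun S n p) = ennreal (1 / real n) * ennreal (self_info (S n) p)" for p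
    by (subst ennreal_mult[symmetric]) (auto simp: Zfun_eq_self_info self_info_nonneg)
  ultimately show ?thesis using assms by (simp add: nn_integral_cmult enn2real_mult)
qed

section \<open>Joint sources and finite mixtures\<close>

lemma map_fst_joint_src: "map_pmf fst (joint_src PX W n) = PX n"
  unfolding joint_src_def map_bind_pmf by (simp add: pmf.map_comp o_def bind_return_pmf')

lemma emeasure_joint_src:
  "emeasure (measure_pmf (joint_src PX W n)) A =
   (\<integral>\<^sup>+x. emeasure (measure_pmf (W n x)) (Pair x -` A) \<partial>measure_pmf (PX n))"
  unfolding joint_src_def emeasure_bind_pmf emeasure_map_pmf ..

lemma prob_joint_src_fst:
  "measure_pmf.prob (joint_src PX W n) {p. fst p = x \<and> Q p} =
   pmf (PX n) x * measure_pmf.prob (W n x) {y. Q (x, y)}"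
proof -
  have "emeasure (measure_pmf (joint_src PX W n)) {p. fst p = x \<and> Q p} =
    (\<integral>\<^sup>+x'. indicator {x} x' * emeasure (measure_pmf (W n x')) {y. Q (x', y)} \<partial>measure_pmf (PX n))"
    unfolding emeasure_joint_src by (rule nn_integral_cong) (auto simp: indicator_def)
  also have "\<dots> = ennreal (pmf (PX n) x) * emeasure (measure_pmf (W n x)) {y. Q (x, y)}"
    by (rule nn_integral_indicator_singleton_pmf)
  finally show ?thesis
    by (simp add: measure_pmf.emeasure_eq_measure ennreal_mult[symmetric])
qed

lemma prob_cond_prob_ge_le:
  assumes "0 < s"
  shows "measure_pmf.prob (PX n) {x. s \<le> measure_pmf.prob (W n x) {y. Q (x, y)}}
     \<le> measure_pmf.prob (joint_src PX W n) {p. Q p} / s"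
proof -
  define f where "f x = measure_pmf.prob (W n x) {y. Q (x, y)}" for x
  have "ennreal s * emeasure (measure_pmf (PX n)) {x. s \<le> f x} =
      (\<integral>\<^sup>+x. ennreal s * indicator {x. s \<le> f x} x \<partial>measure_pmf (PX n))"
    by (simp add: nn_integral_cmult)
  also have "\<dots> \<le> (\<integral>\<^sup>+x. ennreal (f x) \<partial>measure_pmf (PX n))"
    by (intro nn_integral_mono) (auto simp: indicator_def intro: ennreal_leI)
  also have "\<dots> = emeasure (measure_pmf (joint_src PX W n)) {p. Q p}"
    unfolding emeasure_joint_src f_def by (simp add: measure_pmf.emeasure_eq_measure vimage_def)
  finally have "s * measure_pmf.prob (PX n) {x. s \<le> f x} \<le> measure_pmf.prob (joint_src PX W n) {p. Q p}"
    using assms by (simp add: measure_pmf.emeasure_eq_measure ennreal_mult[symmetric])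
  then show ?thesis using assms by (simp add: f_def pos_le_divide_eq mult.commute)
qed

lemma nn_integral_bind_pmf_finite:
  assumes "finite (set_pmf \<alpha>)"
  shows "(\<integral>\<^sup>+p. f p \<partial>measure_pmf (bind_pmf \<alpha> J)) =
    (\<Sum>c\<in>set_pmf \<alpha>. ennreal (pmf \<alpha> c) * (\<integral>\<^sup>+p. f p \<partial>measure_pmf (J c)))"
  unfolding nn_integral_bind_pmf
  by (subst nn_integral_measure_pmf_finite[OF assms]) (auto simp: mult.commute)

lemma prob_bind_pmf_finite:
  assumes "finite (set_pmf \<alpha>)"
  shows "measure_pmf.prob (bind_pmf \<alpha> J) A = (\<Sum>c\<in>set_pmf \<alpha>. pmf \<alpha> c * measure_pmf.prob (J c) A)"
proof -
  have "emeasure (measure_pmf (bind_pmf \<alpha> J)) A =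
      (\<Sum>c\<in>set_pmf \<alpha>. ennreal (pmf \<alpha> c) * emeasure (measure_pmf (J c)) A)"
    unfolding emeasure_bind_pmf
    by (subst nn_integral_measure_pmf_finite[OF assms]) (auto simp: mult.commute)
  then show ?thesis
    by (simp add: measure_pmf.emeasure_eq_measure ennreal_mult[symmetric] sum_nonneg)
qed

lemma pmf_bind_pmf_finite:
  assumes "finite (set_pmf \<alpha>)"
  shows "pmf (bind_pmf \<alpha> J) p = (\<Sum>c\<in>set_pmf \<alpha>. pmf \<alpha> c * pmf (J c) p)"
  using prob_bind_pmf_finite[OF assms, of J "{p}"] by (simp add: measure_pmf_single)

lemma pmf_bind_pmf_ge:
  assumes "finite (set_pmf \<alpha>)"
  shows "pmf \<alpha> c * pmf (J c) p \<le> pmf (bind_pmf \<alpha> J) p"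
proof (cases "c \<in> set_pmf \<alpha>")
  case True
  then show ?thesis unfolding pmf_bind_pmf_finite[OF assms]
    using assms by (intro member_le_sum) auto
next
  case False then show ?thesis by (simp add: set_pmf_eq)
qed

section \<open>The conditional \<open>\<epsilon>\<close>-quantile \<open>hbar\<close>\<close>

definition cond_tail :: "('a \<times> 'b) pmf \<Rightarrow> 'a \<Rightarrow> real \<Rightarrow> real" where
  "cond_tail P x a = measure_pmf.prob P {p. fst p = x \<and> a < self_info P p} / pmf (map_pmf fst P) x"

lemma hbar_eq_Inf_cond_tail: "hbar P \<epsilon> x = Inf {a. cond_tail P x a \<le> \<epsilon>}"
  unfolding hbar_def cond_tail_def self_info_def ..

lemma cond_tail_neg:
  assumes "a < 0" "0 < pmf (map_pmf fst P) x"
  shows "cond_tail P x a = 1"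
proof -
  have "{p. fst p = x \<and> a < self_info P p} = fst -` {x}"
    using assms self_info_nonneg[of P] by (auto intro: less_le_trans)
  then show ?thesis using assms by (simp add: cond_tail_def pmf_map)
qed

lemma cond_tail_antimono: "a \<le> b \<Longrightarrow> cond_tail P x b \<le> cond_tail P x a"
  unfolding cond_tail_def
  by (intro divide_right_mono measure_pmf.finite_measure_mono) auto

lemma cond_tail_le_exists:
  assumes "0 < \<epsilon>" "0 < pmf (map_pmf fst P) x"
  shows "\<exists>a. cond_tail P x a \<le> \<epsilon>"
proof -
  define A where "A k = {p. fst p = x \<and> real k < self_info P p}" for k :: nat
  have "(\<lambda>k. measure_pmf.prob P (A k)) \<longlonglongrightarrow> measure_pmf.prob P (\<Inter> (range A))"
    by (rule measure_pmf.finite_Lim_measure_decseq) (auto simp: A_def monotone_on_def)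
  moreover have "\<Inter> (range A) = {}"
  proof -
    have "p \<notin> A (nat \<lceil>self_info P p\<rceil>)" for p by (auto simp: A_def) linarith
    then show ?thesis by auto
  qed
  ultimately have "(\<lambda>k. measure_pmf.prob P (A k)) \<longlonglongrightarrow> 0" by simp
  then have "eventually (\<lambda>k. measure_pmf.prob P (A k) < \<epsilon> * pmf (map_pmf fst P) x) sequentially"
    using assms by (intro order_tendstoD) auto
  then obtain k where "measure_pmf.prob P (A k) < \<epsilon> * pmf (map_pmf fst P) x"
    by (auto dest: eventually_happens)
  then have "cond_tail P x (real k) \<le> \<epsilon>"
    using assms by (simp add: cond_tail_def A_def pos_divide_le_eq)
  then show ?thesis by blast
qed

lemma hbar_le:
  assumes "cond_tail P x a \<le> \<epsilon>" "\<epsilon> < 1" "0 < pmf (map_pmf fst P) x"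
  shows "hbar P \<epsilon> x \<le> a"
  unfolding hbar_eq_Inf_cond_tail
proof (rule cInf_lower)
  show "a \<in> {a. cond_tail P x a \<le> \<epsilon>}" using assms by simp
  show "bdd_below {a. cond_tail P x a \<le> \<epsilon>}"
  proof (rule bdd_belowI)
    fix b assume "b \<in> {a. cond_tail P x a \<le> \<epsilon>}"
    then show "0 \<le> b" using cond_tail_neg[of b P x] assms by (cases "b < 0") auto
  qed
qed

lemma hbar_ge:
  assumes "\<epsilon> < cond_tail P x a" "0 < \<epsilon>" "0 < pmf (map_pmf fst P) x"
  shows "a \<le> hbar P \<epsilon> x"
  unfolding hbar_eq_Inf_cond_tail
proof (rule cInf_greatest)
  show "{a. cond_tail P x a \<le> \<epsilon>} \<noteq> {}" using cond_tail_le_exists[OF assms(2,3)] by auto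
  fix b assume "b \<in> {a. cond_tail P x a \<le> \<epsilon>}"
  then show "a \<le> b" using cond_tail_antimono[of b a P x] assms by (cases "b < a") auto
qed

lemma hbar_nonneg:
  assumes "0 < \<epsilon>" "\<epsilon> < 1" "0 < pmf (map_pmf fst P) x"
  shows "0 \<le> hbar P \<epsilon> x"
  unfolding hbar_eq_Inf_cond_tail
proof (rule cInf_greatest)
  show "{a. cond_tail P x a \<le> \<epsilon>} \<noteq> {}" using cond_tail_le_exists[OF assms(1,3)] by auto
  fix b assume "b \<in> {a. cond_tail P x a \<le> \<epsilon>}"
  then show "0 \<le> b" using cond_tail_neg[of b P x] assms by (cases "b < 0") auto
qed

lemma hbar_markov_le:
  assumes "0 < \<epsilon>" "\<epsilon> < 1" "0 < pmf (map_pmf fst P) x"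
  shows "ennreal (\<epsilon> * pmf (map_pmf fst P) x * hbar P \<epsilon> x)
     \<le> (\<integral>\<^sup>+p. indicator {p. fst p = x} p * ennreal (self_info P p) \<partial>measure_pmf P)"
    (is "ennreal (?c * ?h) \<le> ?I")
proof (rule dense_le)
  fix w assume w: "w < ennreal (?c * ?h)"
  then obtain r where r: "w = ennreal r" "0 \<le> r" "r < ?c * ?h"
    by (cases w) (auto simp: ennreal_less_iff)
  have c: "0 < ?c" using assms by simp
  show "w \<le> ?I"
  proof (cases "r = 0")
    case False
    define a where "a = r / ?c"
    have a: "0 < a" "a < ?h" "r = ?c * a"
      using r c False by (auto simp: a_def pos_divide_less_eq mult.commute)
    have "\<not> cond_tail P x a \<le> \<epsilon>" using hbar_le[of P x a \<epsilon>] assms a by auto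
    then have "?c < measure_pmf.prob P {p. fst p = x \<and> a < self_info P p}"
      using assms by (simp add: cond_tail_def pos_divide_le_eq mult.commute)
    then have "w \<le> ennreal a * emeasure (measure_pmf P) {p. fst p = x \<and> a < self_info P p}"
      using a c r(1)
      by (simp add: measure_pmf.emeasure_eq_measure ennreal_mult[symmetric] mult.commute)
    also have "\<dots> = (\<integral>\<^sup>+p. ennreal a * indicator {p. fst p = x \<and> a < self_info P p} p \<partial>measure_pmf P)"
      by (simp add: nn_integral_cmult)
    also have "\<dots> \<le> ?I"
      by (rule nn_integral_mono) (auto simp: indicator_def intro: ennreal_leI)
    finally show ?thesis .
  qed (simp add: r)
qed

lemma Hs_eps_split:
  "Hs_eps S \<epsilon> n =
    (\<integral>\<^sup>+x. ennreal (hbar (S n) \<epsilon> x) * indicator G x \<partial>measure_pmf (map_pmf fst (S n))) +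
    (\<integral>\<^sup>+x. ennreal (hbar (S n) \<epsilon> x) * indicator (- G) x \<partial>measure_pmf (map_pmf fst (S n)))"
  unfolding Hs_eps_def by (subst nn_integral_add[symmetric]) (auto intro!: nn_integral_cong simp: indicator_def)

lemma prob_Collect_not: "measure_pmf.prob P {p. \<not> Q p} = 1 - measure_pmf.prob P {p. Q p}"
  using measure_pmf.prob_compl[of "{p. Q p}" P] by (simp add: Compl_eq_Diff_UNIV[symmetric] Collect_neg_eq)

lemma prob_tendsto_0_bound:
  assumes "eventually (\<lambda>n. measure_pmf.prob (P n) (A n) \<le> g n) sequentially" "g \<longlonglongrightarrow> 0"
  shows "(\<lambda>n. measure_pmf.prob (P n) (A n)) \<longlonglongrightarrow> 0"
  using assms(1) by (intro Lim_null_comparison[OF _ assms(2)]) simp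

lemma prob_tendsto_0_subset:
  assumes "(\<lambda>n. measure_pmf.prob (P n) (B n)) \<longlonglongrightarrow> 0" "\<And>n. A n \<subseteq> B n"
  shows "(\<lambda>n. measure_pmf.prob (P n) (A n)) \<longlonglongrightarrow> 0"
  using assms(2) by (intro prob_tendsto_0_bound[OF _ assms(1)] always_eventually allI
    measure_pmf.finite_measure_mono) simp_all

lemma prob_tendsto_0_Un:
  assumes "(\<lambda>n. measure_pmf.prob (P n) (A n)) \<longlonglongrightarrow> 0" "(\<lambda>n. measure_pmf.prob (P n) (B n)) \<longlonglongrightarrow> 0"
  shows "(\<lambda>n. measure_pmf.prob (P n) (A n \<union> B n)) \<longlonglongrightarrow> 0"
proof (rule prob_tendsto_0_bound)
  show "(\<lambda>n. measure_pmf.prob (P n) (A n) + measure_pmf.prob (P n) (B n)) \<longlonglongrightarrow> 0"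
    using tendsto_add[OF assms] by simp
  show "eventually (\<lambda>n. measure_pmf.prob (P n) (A n \<union> B n)
      \<le> measure_pmf.prob (P n) (A n) + measure_pmf.prob (P n) (B n)) sequentially"
    by (intro always_eventually allI measure_Un_le) simp_all
qed

lemma prob_tendsto_0_UN:
  assumes "finite K" "\<And>k. k \<in> K \<Longrightarrow> (\<lambda>n. measure_pmf.prob (P n) (A k n)) \<longlonglongrightarrow> 0"
  shows "(\<lambda>n. measure_pmf.prob (P n) (\<Union>k\<in>K. A k n)) \<longlonglongrightarrow> 0"
proof (rule prob_tendsto_0_bound)
  show "(\<lambda>n. \<Sum>k\<in>K. measure_pmf.prob (P n) (A k n)) \<longlonglongrightarrow> 0"
    using tendsto_sum[of K "\<lambda>k n. measure_pmf.prob (P n) (A k n)" "\<lambda>_. 0"] assms(2) by simp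
  show "eventually (\<lambda>n. measure_pmf.prob (P n) (\<Union>k\<in>K. A k n)
      \<le> (\<Sum>k\<in>K. measure_pmf.prob (P n) (A k n))) sequentially"
    by (intro always_eventually allI measure_pmf.finite_measure_subadditive_finite[OF assms(1)]) simp
qed

lemma prob_mono_on_support:
  assumes "\<And>p. p \<in> set_pmf P \<Longrightarrow> p \<in> A \<Longrightarrow> p \<in> B"
  shows "measure_pmf.prob P A \<le> measure_pmf.prob P B"
proof -
  have "measure_pmf.prob P A = measure_pmf.prob P (A \<inter> set_pmf P)" by (simp add: measure_Int_set_pmf)
  also have "\<dots> \<le> measure_pmf.prob P B" using assms by (intro measure_pmf.finite_measure_mono) auto
  finally show ?thesis .
qed

lemma ennreal_le_sub_plus: "0 \<le> d \<Longrightarrow> ennreal t \<le> ennreal (t - d) + ennreal d"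
  by (cases "t - d \<ge> 0") (auto simp flip: ennreal_plus intro: add_increasing ennreal_leI)

lemma ennreal_tendsto_0I:
  assumes "\<And>d. 0 < d \<Longrightarrow> eventually (\<lambda>n. f n \<le> ennreal d) F"
  shows "(f \<longlongrightarrow> (0::ennreal)) F"
proof (rule order_tendstoI)
  fix a :: ennreal assume "0 < a"
  then obtain b where b: "0 < b" "b < a" using dense by blast
  then obtain d where "b = ennreal d" "0 \<le> d" by (cases b) auto
  with b show "eventually (\<lambda>n. f n < a) F"
    using assms[of d] by (auto elim!: eventually_mono)
qed simp

lemma eventually_le_linear:
  assumes "0 < r"
  shows "eventually (\<lambda>n. a \<le> real n * r) sequentially"
proof -
  obtain N :: nat where N: "a / r \<le> real N" using real_arch_simple by blast
  have "a \<le> real n * r" if "N \<le> n" for n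
  proof -
    have "a / r \<le> real n" using N that by linarith
    then show ?thesis using assms by (simp add: pos_divide_le_eq)
  qed
  then show ?thesis by (rule eventually_sequentiallyI)
qed

lemma tendsto_powr_neg_mult:
  assumes "0 < r"
  shows "(\<lambda>n. 2 powr (- (real n * r))) \<longlonglongrightarrow> 0"
proof -
  have "2 powr (- (real n * r)) = (2 powr (- r)) ^ n" for n
    by (simp add: powr_realpow[symmetric] powr_powr mult.commute)
  moreover have "norm (2 powr (- r) :: real) < 1" using assms by (simp add: powr_minus inverse_less_1_iff)
  ultimately show ?thesis by (simp add: LIMSEQ_power_zero)
qed

section \<open>Uniform integrability and the strong converse property\<close>

lemma nn_integral_Zfun_ge:
  assumes "0 \<le> b"
  shows "ennreal (b * (1 - measure_pmf.prob (S n) {p. Zfun S n p < b}))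
    \<le> (\<integral>\<^sup>+p. ennreal (Zfun S n p) \<partial>measure_pmf (S n))"
proof -
  have "ennreal (b * (1 - measure_pmf.prob (S n) {p. Zfun S n p < b})) =
      ennreal b * emeasure (measure_pmf (S n)) {p. \<not> Zfun S n p < b}"
    using assms by (simp add: measure_pmf.emeasure_eq_measure prob_Collect_not ennreal_mult)
  also have "\<dots> = (\<integral>\<^sup>+p. ennreal b * indicator {p. \<not> Zfun S n p < b} p \<partial>measure_pmf (S n))"
    by (simp add: nn_integral_cmult)
  also have "\<dots> \<le> (\<integral>\<^sup>+p. ennreal (Zfun S n p) \<partial>measure_pmf (S n))"
    by (intro nn_integral_mono) (auto simp: indicator_def intro: ennreal_leI)
  finally show ?thesis .
qed

lemma nn_integral_Zfun_le:
  "(\<integral>\<^sup>+p. ennreal (Zfun S n p) \<partial>measure_pmf (S n))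
    \<le> ennreal u + (\<integral>\<^sup>+p. ennreal (Zfun S n p) * indicator {p. u < Zfun S n p} p \<partial>measure_pmf (S n))"
proof -
  have "(\<integral>\<^sup>+p. ennreal (Zfun S n p) \<partial>measure_pmf (S n))
      \<le> (\<integral>\<^sup>+p. ennreal u + ennreal (Zfun S n p) * indicator {p. u < Zfun S n p} p \<partial>measure_pmf (S n))"
    by (intro nn_integral_mono) (auto simp: indicator_def intro: ennreal_leI)
  then show ?thesis by (simp add: nn_integral_add measure_pmf.emeasure_space_1)
qed

lemma uniformly_integrable_tail_less:
  assumes "src_uniformly_integrable S" "0 < d"
  obtains u where "u > 0" "\<And>n. n \<ge> 1 \<Longrightarrow>
    (\<integral>\<^sup>+p. ennreal (Zfun S n p) * indicator {p. u \<le> Zfun S n p} p \<partial>measure_pmf (S n)) < ennreal d"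
proof -
  let ?tail = "\<lambda>u n. \<integral>\<^sup>+ p. ennreal (if \<bar>Zfun S n p\<bar> \<ge> u then \<bar>Zfun S n p\<bar> else 0) \<partial>measure_pmf (S n)"
  have "eventually (\<lambda>u. (\<Squnion>n\<in>{1..}. ?tail u n) < ennreal d) at_top"
    using assms unfolding src_uniformly_integrable_def by (intro order_tendstoD) auto
  then obtain N where N: "\<And>u. u \<ge> N \<Longrightarrow> (\<Squnion>n\<in>{1..}. ?tail u n) < ennreal d"
    by (auto simp: eventually_at_top_linorder)
  have "?tail (max N 1) n < ennreal d" if "n \<ge> 1" for n
    using that N[of "max N 1"] by (meson SUP_upper atLeast_iff le_less_trans max.cobounded1)
  moreover have "?tail u n = (\<integral>\<^sup>+p. ennreal (Zfun S n p) * indicator {p. u \<le> Zfun S n p} p \<partial>measure_pmf (S n))"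
    for u n using Zfun_nonneg[of S n] by (intro nn_integral_cong) (auto simp: indicator_def)
  ultimately show ?thesis using that[of "max N 1"] by (simp only: max_def split: if_splits) auto
qed

lemma uniformly_integrable_vanishing_sets:
  assumes UI: "src_uniformly_integrable S"
    and E: "(\<lambda>n. measure_pmf.prob (S n) (E n)) \<longlonglongrightarrow> 0"
  shows "(\<lambda>n. \<integral>\<^sup>+p. ennreal (Zfun S n p) * indicator (E n) p \<partial>measure_pmf (S n)) \<longlonglongrightarrow> 0"
proof (rule ennreal_tendsto_0I)
  fix d :: real assume d: "0 < d"
  obtain u where u: "u > 0" and tail: "\<And>n. n \<ge> 1 \<Longrightarrow>
      (\<integral>\<^sup>+p. ennreal (Zfun S n p) * indicator {p. u \<le> Zfun S n p} p \<partial>measure_pmf (S n)) < ennreal (d/2)"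
    using uniformly_integrable_tail_less[OF UI, of "d/2"] d by auto
  have "eventually (\<lambda>n. measure_pmf.prob (S n) (E n) < d / (2*u)) sequentially"
    using E d u by (intro order_tendstoD) auto
  with eventually_ge_at_top[of 1]
  show "eventually (\<lambda>n. (\<integral>\<^sup>+p. ennreal (Zfun S n p) * indicator (E n) p \<partial>measure_pmf (S n)) \<le> ennreal d) sequentially"
  proof eventually_elim
    case (elim n)
    have "(\<integral>\<^sup>+p. ennreal (Zfun S n p) * indicator (E n) p \<partial>measure_pmf (S n)) \<le>
        (\<integral>\<^sup>+p. ennreal u * indicator (E n) p +
          ennreal (Zfun S n p) * indicator {p. u \<le> Zfun S n p} p \<partial>measure_pmf (S n))"
      by (intro nn_integral_mono) (auto simp: indicator_def intro: ennreal_leI)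
    also have "\<dots> = ennreal (u * measure_pmf.prob (S n) (E n)) +
        (\<integral>\<^sup>+p. ennreal (Zfun S n p) * indicator {p. u \<le> Zfun S n p} p \<partial>measure_pmf (S n))"
      using u by (simp add: nn_integral_add nn_integral_cmult measure_pmf.emeasure_eq_measure ennreal_mult)
    also have "\<dots> \<le> ennreal (d/2) + ennreal (d/2)"
      using elim u tail[OF elim(1)]
      by (intro add_mono ennreal_leI less_imp_le) (auto simp: pos_less_divide_eq mult.commute)
    also have "\<dots> = ennreal d" using d by (simp flip: ennreal_plus)
    finally show ?case .
  qed
qed

lemma uniformly_integrable_bounded:
  assumes "src_uniformly_integrable S"
  obtains K where "\<And>n. n \<ge> 1 \<Longrightarrow> (\<integral>\<^sup>+p. ennreal (Zfun S n p) \<partial>measure_pmf (S n)) \<le> ennreal K"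
proof -
  obtain u where u: "u > 0" and tail: "\<And>n. n \<ge> 1 \<Longrightarrow>
      (\<integral>\<^sup>+p. ennreal (Zfun S n p) * indicator {p. u \<le> Zfun S n p} p \<partial>measure_pmf (S n)) < ennreal 1"
    using uniformly_integrable_tail_less[OF assms, of 1] by auto
  have "(\<integral>\<^sup>+p. ennreal (Zfun S n p) \<partial>measure_pmf (S n)) \<le> ennreal u + ennreal 1" if "n \<ge> 1" for n
  proof -
    have "{p. u < Zfun S n p} \<subseteq> {p. u \<le> Zfun S n p}" by auto
    then have "(\<integral>\<^sup>+p. ennreal (Zfun S n p) * indicator {p. u < Zfun S n p} p \<partial>measure_pmf (S n))
        \<le> (\<integral>\<^sup>+p. ennreal (Zfun S n p) * indicator {p. u \<le> Zfun S n p} p \<partial>measure_pmf (S n))"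
      by (intro nn_integral_mono mult_left_mono) (auto simp: indicator_def)
    then show ?thesis
      using nn_integral_Zfun_le[of S n u] tail[OF that] by (meson add_left_mono less_imp_le order_trans)
  qed
  moreover have "ennreal u + ennreal 1 = ennreal (u + 1)" using u by (simp add: ennreal_plus)
  ultimately show ?thesis using that[of "u + 1"] by metis
qed

lemma uniformly_integrable_spectral_sup:
  assumes UI: "src_uniformly_integrable S"
  obtains H where "0 \<le> H"
    "Sup (ereal ` {b. (\<lambda>n. measure_pmf.prob (S n) {p. Zfun S n p < b}) \<longlonglongrightarrow> 0}) = ereal H"
proof -
  define Bs where "Bs = {b. (\<lambda>n. measure_pmf.prob (S n) {p. Zfun S n p < b}) \<longlonglongrightarrow> 0}"
  obtain K where K: "\<And>n. n \<ge> 1 \<Longrightarrow> (\<integral>\<^sup>+p. ennreal (Zfun S n p) \<partial>measure_pmf (S n)) \<le> ennreal K"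
    using uniformly_integrable_bounded[OF UI] by blast
  have "0 \<in> Bs"
    using Zfun_nonneg[of S] by (simp add: Bs_def not_less[symmetric] del: not_less)
  then have "ereal 0 \<le> Sup (ereal ` Bs)" by (rule SUP_upper)
  moreover have "Sup (ereal ` Bs) \<le> ereal (2 * \<bar>K\<bar> + 2)"
  proof (rule SUP_least)
    fix b assume "b \<in> Bs"
    show "ereal b \<le> ereal (2 * \<bar>K\<bar> + 2)"
    proof (rule ccontr)
      assume "\<not> ?thesis"
      then have b: "2 * \<bar>K\<bar> + 2 < b" by simp
      have "eventually (\<lambda>n. measure_pmf.prob (S n) {p. Zfun S n p < b} < 1/2 \<and> n \<ge> 1) sequentially"
        using \<open>b \<in> Bs\<close> eventually_ge_at_top[of 1]
        unfolding Bs_def by (intro eventually_conj order_tendstoD) auto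
      then obtain n where n: "measure_pmf.prob (S n) {p. Zfun S n p < b} < 1/2" "n \<ge> 1"
        by (auto dest: eventually_happens)
      have "b * (1/2) < b * (1 - measure_pmf.prob (S n) {p. Zfun S n p < b})"
        using n b by (intro mult_strict_left_mono) auto
      moreover have "ennreal (b * (1 - measure_pmf.prob (S n) {p. Zfun S n p < b})) \<le> ennreal K"
        using order_trans[OF nn_integral_Zfun_ge[of b S n] K[OF n(2)]] b by simp
      ultimately show False using b by (auto simp: ennreal_le_iff2)
    qed
  qed
  ultimately obtain H where "0 \<le> H" "Sup (ereal ` Bs) = ereal H"
    by (cases "Sup (ereal ` Bs)") auto
  with that show ?thesis unfolding Bs_def by blast
qed

lemma strong_converse_concentration:
  assumes UI: "src_uniformly_integrable S" and SC: "cond_strong_converse S"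
  obtains H where "0 \<le> H"
    "\<And>\<gamma>. \<gamma> > 0 \<Longrightarrow> (\<lambda>n. measure_pmf.prob (S n) {p. H + \<gamma> < Zfun S n p}) \<longlonglongrightarrow> 0"
    "\<And>\<gamma>. \<gamma> > 0 \<Longrightarrow> (\<lambda>n. measure_pmf.prob (S n) {p. Zfun S n p < H - \<gamma>}) \<longlonglongrightarrow> 0"
proof -
  define Bs where "Bs = {b. (\<lambda>n. measure_pmf.prob (S n) {p. Zfun S n p < b}) \<longlonglongrightarrow> 0}"
  define As where "As = {a. (\<lambda>n. measure_pmf.prob (S n) {p. Zfun S n p > a}) \<longlonglongrightarrow> 0}"
  obtain H where H: "0 \<le> H" "Sup (ereal ` Bs) = ereal H"
    using uniformly_integrable_spectral_sup[OF UI] unfolding Bs_def by blast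
  have HA: "Inf (ereal ` As) = ereal H"
    using SC H unfolding cond_strong_converse_def As_def Bs_def by simp
  have "(\<lambda>n. measure_pmf.prob (S n) {p. Zfun S n p < H - \<gamma>}) \<longlonglongrightarrow> 0" if "\<gamma> > 0" for \<gamma>
  proof -
    have "ereal (H - \<gamma>) < Sup (ereal ` Bs)" using H that by simp
    then obtain b where "b \<in> Bs" "H - \<gamma> < b" by (auto simp: less_SUP_iff)
    then show ?thesis unfolding Bs_def by (auto elim!: prob_tendsto_0_subset)
  qed
  moreover have "(\<lambda>n. measure_pmf.prob (S n) {p. H + \<gamma> < Zfun S n p}) \<longlonglongrightarrow> 0" if "\<gamma> > 0" for \<gamma>
  proof -
    have "Inf (ereal ` As) < ereal (H + \<gamma>)" using HA that by simp
    then obtain a where "a \<in> As" "a < H + \<gamma>" by (auto simp: INF_less_iff)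
    then show ?thesis unfolding As_def by (auto elim!: prob_tendsto_0_subset)
  qed
  ultimately show ?thesis using that H(1) by blast
qed

lemma eventually_nn_integral_Zfun_gt:
  assumes UI: "src_uniformly_integrable S" and a: "a < H"
    and lower: "\<And>\<gamma>. \<gamma> > 0 \<Longrightarrow> (\<lambda>n. measure_pmf.prob (S n) {p. Zfun S n p < H - \<gamma>}) \<longlonglongrightarrow> 0"
  shows "eventually (\<lambda>n. a < enn2real (\<integral>\<^sup>+p. ennreal (Zfun S n p) \<partial>measure_pmf (S n))) sequentially"
proof -
  define e where "e n = (\<integral>\<^sup>+p. ennreal (Zfun S n p) \<partial>measure_pmf (S n))" for n
  obtain K where K: "\<And>n. n \<ge> 1 \<Longrightarrow> e n \<le> ennreal K"
    using uniformly_integrable_bounded[OF UI] unfolding e_def by blast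
  define \<gamma> where "\<gamma> = (H - a) / 2"
  have g: "\<gamma> > 0" "a = H - 2 * \<gamma>" using a by (auto simp: \<gamma>_def field_simps)
  show ?thesis
  proof (cases "H - \<gamma> \<le> 0")
    case True
    then have "a < 0" using g by linarith
    then show ?thesis by (intro always_eventually allI) (meson enn2real_nonneg less_le_trans)
  next
    case False
    have "eventually (\<lambda>n. measure_pmf.prob (S n) {p. Zfun S n p < H - \<gamma>} < \<gamma> / (H - \<gamma>)) sequentially"
      using lower[OF g(1)] g False by (intro order_tendstoD) auto
    with eventually_ge_at_top[of 1] show ?thesis
    proof eventually_elim
      case (elim n)
      define q where "q = measure_pmf.prob (S n) {p. Zfun S n p < H - \<gamma>}"
      have "ennreal ((H - \<gamma>) * (1 - q)) \<le> e n"
        using nn_integral_Zfun_ge[of "H - \<gamma>" S n] False by (simp add: e_def q_def)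
      moreover have "e n \<noteq> \<top>" using K[OF elim(1)] by (auto simp: top_unique)
      ultimately have "(H - \<gamma>) * (1 - q) \<le> enn2real (e n)"
        using False by (cases "e n") (auto simp: ennreal_le_iff2)
      moreover have "q * (H - \<gamma>) < \<gamma>" using elim(2) False by (simp add: q_def pos_less_divide_eq)
      ultimately show ?case using g by (simp add: algebra_simps e_def)
    qed
  qed
qed

lemma eventually_nn_integral_Zfun_lt:
  assumes UI: "src_uniformly_integrable S" and H: "0 \<le> H" and a: "H < a"
    and upper: "\<And>\<gamma>. \<gamma> > 0 \<Longrightarrow> (\<lambda>n. measure_pmf.prob (S n) {p. H + \<gamma> < Zfun S n p}) \<longlonglongrightarrow> 0"
  shows "eventually (\<lambda>n. enn2real (\<integral>\<^sup>+p. ennreal (Zfun S n p) \<partial>measure_pmf (S n)) < a) sequentially"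
proof -
  define \<gamma> where "\<gamma> = (a - H) / 3"
  have g: "\<gamma> > 0" "H + 2 * \<gamma> < a" using a by (auto simp: \<gamma>_def field_simps)
  have "(\<lambda>n. \<integral>\<^sup>+p. ennreal (Zfun S n p) * indicator {p. H + \<gamma> < Zfun S n p} p \<partial>measure_pmf (S n)) \<longlonglongrightarrow> 0"
    by (rule uniformly_integrable_vanishing_sets[OF UI upper[OF g(1)]])
  then have "eventually (\<lambda>n. (\<integral>\<^sup>+p. ennreal (Zfun S n p) * indicator {p. H + \<gamma> < Zfun S n p} p
      \<partial>measure_pmf (S n)) < ennreal \<gamma>) sequentially"
    using g by (intro order_tendstoD) auto
  then show ?thesis
  proof eventually_elim
    case (elim n)
    have "(\<integral>\<^sup>+p. ennreal (Zfun S n p) \<partial>measure_pmf (S n)) \<le> ennreal (H + \<gamma>) + ennreal \<gamma>"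
      using nn_integral_Zfun_le[of S n "H + \<gamma>"] elim by (meson add_left_mono less_imp_le order_trans)
    also have "\<dots> = ennreal (H + 2 * \<gamma>)" using H g by (simp flip: ennreal_plus)
    finally have "enn2real (\<integral>\<^sup>+p. ennreal (Zfun S n p) \<partial>measure_pmf (S n)) \<le> H + 2 * \<gamma>"
      using H g by (intro enn2real_leI) auto
    then show ?case using g by linarith
  qed
qed

lemma cond_entropy_rate_concentration:
  assumes UI: "src_uniformly_integrable S" and SC: "cond_strong_converse S"
  shows "0 \<le> cond_entropy_rate S"
    "\<And>\<gamma>. \<gamma> > 0 \<Longrightarrow> (\<lambda>n. measure_pmf.prob (S n) {p. cond_entropy_rate S + \<gamma> < Zfun S n p}) \<longlonglongrightarrow> 0"
    "\<And>\<gamma>. \<gamma> > 0 \<Longrightarrow> (\<lambda>n. measure_pmf.prob (S n) {p. Zfun S n p < cond_entropy_rate S - \<gamma>}) \<longlonglongrightarrow> 0"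
proof -
  obtain H where H: "0 \<le> H"
    and upper: "\<And>\<gamma>. \<gamma> > 0 \<Longrightarrow> (\<lambda>n. measure_pmf.prob (S n) {p. H + \<gamma> < Zfun S n p}) \<longlonglongrightarrow> 0"
    and lower: "\<And>\<gamma>. \<gamma> > 0 \<Longrightarrow> (\<lambda>n. measure_pmf.prob (S n) {p. Zfun S n p < H - \<gamma>}) \<longlonglongrightarrow> 0"
    using strong_converse_concentration[OF UI SC] by blast
  have "(\<lambda>n. cond_entropy_n S n / real n) \<longlonglongrightarrow> H"
  proof (rule Lim_transform_eventually)
    show "(\<lambda>n. enn2real (\<integral>\<^sup>+p. ennreal (Zfun S n p) \<partial>measure_pmf (S n))) \<longlonglongrightarrow> H"
      using eventually_nn_integral_Zfun_gt[OF UI _ lower] eventually_nn_integral_Zfun_lt[OF UI H _ upper]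
      by (rule order_tendstoI)
    show "eventually (\<lambda>n. enn2real (\<integral>\<^sup>+p. ennreal (Zfun S n p) \<partial>measure_pmf (S n)) =
        cond_entropy_n S n / real n) sequentially"
      using eventually_ge_at_top[of 1] by eventually_elim (simp add: cond_entropy_n_div_eq)
  qed
  then have "cond_entropy_rate S = H" unfolding cond_entropy_rate_def by (rule limI)
  with H upper lower show "0 \<le> cond_entropy_rate S"
    "\<And>\<gamma>. \<gamma> > 0 \<Longrightarrow> (\<lambda>n. measure_pmf.prob (S n) {p. cond_entropy_rate S + \<gamma> < Zfun S n p}) \<longlonglongrightarrow> 0"
    "\<And>\<gamma>. \<gamma> > 0 \<Longrightarrow> (\<lambda>n. measure_pmf.prob (S n) {p. Zfun S n p < cond_entropy_rate S - \<gamma>}) \<longlonglongrightarrow> 0"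
    by auto
qed

section \<open>Self-information of a dominating distribution\<close>

lemma prob_le_of_pmf_le:
  assumes le: "\<And>x. x \<in> A \<Longrightarrow> pmf P x \<le> c * f x" and f: "\<And>x. 0 \<le> f x"
    and int_f: "(\<integral>\<^sup>+x. ennreal (f x) \<partial>count_space UNIV) \<le> 1" and c: "0 \<le> c"
  shows "measure_pmf.prob P A \<le> c"
proof -
  have "emeasure (measure_pmf P) A = (\<integral>\<^sup>+x. ennreal (pmf P x) * indicator A x \<partial>count_space UNIV)"
    by (simp add: nn_integral_measure_pmf[symmetric])
  also have "\<dots> \<le> (\<integral>\<^sup>+x. ennreal c * ennreal (f x) \<partial>count_space UNIV)"
    using le c f by (intro nn_integral_mono) (auto simp: indicator_def ennreal_mult[symmetric] intro!: ennreal_leI)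
  also have "\<dots> \<le> ennreal c"
    using mult_left_mono[OF int_f, of "ennreal c"] by (simp add: nn_integral_cmult)
  finally show ?thesis using c by (simp add: measure_pmf.emeasure_eq_measure)
qed

lemma pmf_le_of_self_info_gap:
  assumes "self_info M p < self_info P p - t" "pmf P p > 0" "pmf M p > 0"
  shows "pmf P p \<le> 2 powr (- t) * (pmf (map_pmf snd P) (snd p) * condXY M (fst p) (snd p))"
proof -
  have cP: "condXY P (fst p) (snd p) > 0" and cM: "condXY M (fst p) (snd p) > 0"
    using assms(2,3) condXY_pos[of P "fst p" "snd p"] condXY_pos[of M "fst p" "snd p"] by simp_all
  have "log 2 (2 powr t * condXY P (fst p) (snd p)) < log 2 (condXY M (fst p) (snd p))"
    using assms cP by (simp add: self_info_pos_eq log_mult_pos)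
  then have "2 powr t * condXY P (fst p) (snd p) < condXY M (fst p) (snd p)"
    using cP cM by simp
  then have "condXY P (fst p) (snd p) \<le> 2 powr (- t) * condXY M (fst p) (snd p)"
    by (simp add: powr_minus field_simps)
  then show ?thesis
    using pmf_eq_pmf_map_snd_mult_condXY[of P "fst p" "snd p"]
    by (simp add: mult_left_mono mult.left_commute)
qed

lemma prob_self_info_gap_le:
  assumes pos: "\<And>p. p \<in> set_pmf P \<Longrightarrow> pmf M p > 0"
  shows "measure_pmf.prob P {p. self_info M p < self_info P p - t} \<le> 2 powr (- t)"
proof (rule prob_le_of_pmf_le)
  fix p assume "p \<in> {p. self_info M p < self_info P p - t}"
  show "pmf P p \<le> 2 powr (- t) * (pmf (map_pmf snd P) (snd p) * condXY M (fst p) (snd p))"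
  proof (cases "pmf P p > 0")
    case True
    with \<open>p \<in> _\<close> show ?thesis
      using pos[of p] by (intro pmf_le_of_self_info_gap) (auto simp: set_pmf_eq')
  next
    case False
    then have "pmf P p = 0" using pmf_nonneg[of P p] by linarith
    then show ?thesis by (simp add: condXY_nonneg)
  qed
next
  have "(\<integral>\<^sup>+p. ennreal (pmf (map_pmf snd P) (snd p) * condXY M (fst p) (snd p)) \<partial>count_space UNIV) =
      (\<integral>\<^sup>+y. ennreal (pmf (map_pmf snd P) y) * (\<integral>\<^sup>+x. ennreal (condXY M x y) \<partial>count_space UNIV) \<partial>count_space UNIV)"
    by (subst nn_integral_snd_count_space[symmetric])
       (simp add: ennreal_mult condXY_nonneg nn_integral_cmult)
  also have "\<dots> \<le> (\<integral>\<^sup>+y. ennreal (pmf (map_pmf snd P) y) \<partial>count_space UNIV)"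
    using nn_integral_condXY_le_1[of M] by (intro nn_integral_mono) (auto intro: mult_left_le)
  finally show "(\<integral>\<^sup>+p. ennreal (pmf (map_pmf snd P) (snd p) * condXY M (fst p) (snd p)) \<partial>count_space UNIV) \<le> 1"
    by (simp add: nn_integral_pmf_eq_1)
qed (simp_all add: condXY_nonneg)

lemma prob_log_ratio_gt_le:
  "measure_pmf.prob q {y. t < log 2 (pmf r y / pmf q y)} \<le> 2 powr (- t)"
proof (cases "t < 0")
  case True
  then have "1 \<le> 2 powr (- t)" by (intro ge_one_powr_ge_zero) auto
  then show ?thesis using measure_pmf.prob_le_1 order_trans by blast
next
  case t: False
  show ?thesis
  proof (rule prob_le_of_pmf_le)
    fix y assume "y \<in> {y. t < log 2 (pmf r y / pmf q y)}"
    then have lt: "t < log 2 (pmf r y / pmf q y)" by simp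
    show "pmf q y \<le> 2 powr (- t) * pmf r y"
    proof (cases "pmf q y > 0 \<and> pmf r y > 0")
      case True
      then have "2 powr t < pmf r y / pmf q y" using lt by (simp add: less_log_iff)
      then show ?thesis using True by (simp add: powr_minus field_simps)
    next
      case False
      then show ?thesis using lt t pmf_nonneg[of q y] pmf_nonneg[of r y] by (auto simp: log_def)
    qed
  qed (simp_all add: nn_integral_pmf_eq_1)
qed

lemma nn_integral_log_ratio_pos_le:
  "(\<integral>\<^sup>+y. ennreal (max 0 (log 2 (pmf r y / pmf q y))) \<partial>measure_pmf q) \<le> ennreal (1 / ln 2)"
proof -
  have "pmf q y * max 0 (log 2 (pmf r y / pmf q y)) \<le> 1 / ln 2 * pmf r y" for y
  proof (cases "pmf q y > 0 \<and> pmf r y > 0")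
    case True
    then have "0 < pmf r y / pmf q y" by simp
    then have "log 2 (pmf r y / pmf q y) \<le> (pmf r y / pmf q y) / ln 2"
      unfolding log_def using ln_less_self by (intro divide_right_mono) (auto intro: less_imp_le)
    then have "max 0 (log 2 (pmf r y / pmf q y)) \<le> (pmf r y / pmf q y) / ln 2"
      using True by simp
    then have "pmf q y * max 0 (log 2 (pmf r y / pmf q y)) \<le> pmf q y * ((pmf r y / pmf q y) / ln 2)"
      by (intro mult_left_mono) auto
    then show ?thesis using True by simp
  next
    case False
    then have "pmf q y = 0 \<or> pmf r y = 0" using pmf_nonneg[of q y] pmf_nonneg[of r y] by auto
    then show ?thesis by (auto simp: log_def)
  qed
  then have "(\<integral>\<^sup>+y. ennreal (max 0 (log 2 (pmf r y / pmf q y))) \<partial>measure_pmf q) \<le>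
     (\<integral>\<^sup>+y. ennreal (1 / ln 2) * ennreal (pmf r y) \<partial>count_space UNIV)"
    unfolding nn_integral_measure_pmf
    by (intro nn_integral_mono) (subst (1 2) ennreal_mult[symmetric]; auto intro: ennreal_leI)
  also have "\<dots> = ennreal (1 / ln 2)" by (simp add: nn_integral_cmult nn_integral_pmf_eq_1)
  finally show ?thesis .
qed

lemma self_info_dominated_le:
  assumes dom: "\<And>p. a * pmf P p \<le> pmf M p" and a: "0 < a" and p: "pmf P p > 0"
  shows "self_info M p \<le> self_info P p + log 2 (1 / a)
    + log 2 (pmf (map_pmf snd M) (snd p) / pmf (map_pmf snd P) (snd p))"
proof -
  obtain x y where xy: "p = (x, y)" by (cases p)
  define QM where "QM = pmf (map_pmf snd M) y"
  define QP where "QP = pmf (map_pmf snd P) y"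
  define cP where "cP = condXY P x y"
  have QP: "QP > 0" using p pmf_le_pmf_map_snd[of P x y] by (simp add: QP_def xy)
  have cP: "cP > 0" using condXY_pos[of P x y] p by (simp add: cP_def xy)
  have QM: "QM > 0"
    using dom[of p] a p pmf_le_pmf_map_snd[of M x y] by (simp add: QM_def xy) (meson mult_pos_pos less_le_trans)
  have "a * (QP * cP) \<le> pmf M (x, y)"
    using dom[of p] pmf_eq_pmf_map_snd_mult_condXY[of P x y] by (simp add: xy QP_def cP_def)
  then have low: "a * QP * cP / QM \<le> condXY M x y"
    using QM by (simp add: condXY_def QM_def divide_right_mono mult_ac)
  have pos: "0 < a * QP * cP / QM" using a QP cP QM by simp
  have cM: "0 < condXY M x y" using low pos by linarith
  have "1 / condXY M x y \<le> 1 / (a * QP * cP / QM)"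
    using low pos by (intro divide_left_mono) (auto intro!: mult_pos_pos simp del: times_divide_eq_left times_divide_eq_right)
  then have "log 2 (1 / condXY M x y) \<le> log 2 (1 / (a * QP * cP / QM))"
    using pos cM a QP cP QM by (subst log_le_cancel_iff) auto
  also have "\<dots> = log 2 (1 / cP) + log 2 (1 / a) + log 2 (QM / QP)"
    using a QP cP QM by (simp add: log_divide log_mult_pos)
  finally show ?thesis by (simp add: self_info_def xy QM_def QP_def cP_def)
qed

lemma nn_integral_self_info_dominated_le:
  assumes dom: "\<And>p. a * pmf P p \<le> pmf M p" and a: "0 < a" "a \<le> 1"
  shows "(\<integral>\<^sup>+p. ennreal (self_info M p) * indicator B p \<partial>measure_pmf P) \<le>
     (\<integral>\<^sup>+p. ennreal (self_info P p) * indicator B p \<partial>measure_pmf P)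
       + ennreal (log 2 (1 / a)) + ennreal (1 / ln 2)"
proof -
  define g where "g y = max 0 (log 2 (pmf (map_pmf snd M) y / pmf (map_pmf snd P) y))" for y
  have la: "0 \<le> log 2 (1 / a)" using a by simp
  have "(\<integral>\<^sup>+p. ennreal (self_info M p) * indicator B p \<partial>measure_pmf P) \<le>
     (\<integral>\<^sup>+p. ennreal (self_info P p) * indicator B p + ennreal (log 2 (1 / a)) + ennreal (g (snd p))
       \<partial>measure_pmf P)"
  proof (intro nn_integral_mono_AE AE_pmfI)
    fix p assume "p \<in> set_pmf P"
    then have "self_info M p \<le> self_info P p + log 2 (1 / a) + g (snd p)"
      using self_info_dominated_le[OF dom a(1)] by (fastforce simp: set_pmf_eq' g_def)
    then have "ennreal (self_info M p) \<le> ennreal (self_info P p + log 2 (1 / a) + g (snd p))"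
      by (rule ennreal_leI)
    also have "\<dots> = ennreal (self_info P p) + ennreal (log 2 (1 / a)) + ennreal (g (snd p))"
      using la self_info_nonneg[of P p] by (simp add: ennreal_plus g_def)
    finally have "ennreal (self_info M p)
        \<le> ennreal (self_info P p) + ennreal (log 2 (1 / a)) + ennreal (g (snd p))" .
    then show "ennreal (self_info M p) * indicator B p
        \<le> ennreal (self_info P p) * indicator B p + ennreal (log 2 (1 / a)) + ennreal (g (snd p))"
      by (cases "p \<in> B") auto
  qed
  also have "\<dots> = (\<integral>\<^sup>+p. ennreal (self_info P p) * indicator B p \<partial>measure_pmf P) + ennreal (log 2 (1 / a)) +
      (\<integral>\<^sup>+y. ennreal (g y) \<partial>measure_pmf (map_pmf snd P))"
    by (simp add: nn_integral_add measure_pmf.emeasure_space_1 nn_integral_map_pmf)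
  also have "(\<integral>\<^sup>+y. ennreal (g y) \<partial>measure_pmf (map_pmf snd P)) \<le> ennreal (1 / ln 2)"
    unfolding g_def by (rule nn_integral_log_ratio_pos_le)
  finally show ?thesis by (simp add: add_left_mono)
qed

lemma nn_integral_fibres_fst:
  "(\<integral>\<^sup>+x. \<integral>\<^sup>+p. indicator {p. fst p = x} p * h p \<partial>measure_pmf P \<partial>count_space UNIV)
    = (\<integral>\<^sup>+p. h p \<partial>measure_pmf P)"
proof -
  have "(\<integral>\<^sup>+x. \<integral>\<^sup>+p. indicator {p. fst p = x} p * h p \<partial>measure_pmf P \<partial>count_space UNIV) =
      (\<integral>\<^sup>+p. \<integral>\<^sup>+x. (ennreal (pmf P p) * h p) * indicator {fst p} x \<partial>count_space UNIV \<partial>count_space UNIV)"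
    unfolding nn_integral_measure_pmf
    by (subst nn_integral_fst_count_space[symmetric], subst nn_integral_snd_count_space[symmetric])
       (auto intro!: nn_integral_cong simp: indicator_def)
  then show ?thesis by (simp add: nn_integral_measure_pmf)
qed

lemma D_lower_pos_eventually:
  assumes "D_lower PI PK > 0"
  shows "eventually (\<lambda>\<delta>. (\<lambda>n. measure_pmf.prob (PI n)
    {x. (1 / real n) * log 2 (pmf (PI n) x / pmf (PK n) x) < \<delta>}) \<longlonglongrightarrow> 0) (at_right 0)"
proof -
  have "ereal 0 < D_lower PI PK" using assms by (simp add: zero_ereal_def)
  then obtain b where b: "0 < b" and lim: "(\<lambda>n. measure_pmf.prob (PI n)
      {x. (1 / real n) * log 2 (pmf (PI n) x / pmf (PK n) x) < b}) \<longlonglongrightarrow> 0"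
    unfolding D_lower_def by (auto simp: less_SUP_iff)
  have "(\<lambda>n. measure_pmf.prob (PI n)
      {x. (1 / real n) * log 2 (pmf (PI n) x / pmf (PK n) x) < \<delta>}) \<longlonglongrightarrow> 0" if "\<delta> < b" for \<delta>
    using that by (intro prob_tendsto_0_subset[OF lim]) auto
  then show ?thesis unfolding eventually_at_right_field using b by blast
qed

section \<open>Mixtures of sources with distinguishable marginals\<close>

locale mixture_source =
  fixes m :: nat and mm :: "nat \<Rightarrow> nat"
    and PX :: "nat \<Rightarrow> nat \<Rightarrow> ('x::countable) list pmf"
    and W :: "nat \<Rightarrow> nat \<Rightarrow> nat \<Rightarrow> 'x list \<Rightarrow> ('y::countable) list pmf"
    and \<alpha> :: "(nat \<times> nat) pmf"
  assumes mm_pos: "\<forall>i<m. 0 < mm i"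
    and alpha_supp: "set_pmf \<alpha> = {(i, j). i < m \<and> j < mm i}"
    and PX_len: "\<forall>i<m. \<forall>n. set_pmf (PX i n) \<subseteq> {xs. length xs = n}"
    and PX_pos: "\<forall>i<m. \<forall>n xs. length xs = n \<longrightarrow> pmf (PX i n) xs > 0"
    and UI: "\<forall>i<m. \<forall>j<mm i. src_uniformly_integrable (joint_src (PX i) (W i j))"
    and SC: "\<forall>i<m. \<forall>j<mm i. cond_strong_converse (joint_src (PX i) (W i j))"
    and D_pos: "\<forall>i<m. \<forall>k<m. i \<noteq> k \<longrightarrow> D_lower (PX i) (PX k) > 0"
begin

abbreviation C :: "(nat \<times> nat) set" where "C \<equiv> set_pmf \<alpha>"

definition component :: "nat \<times> nat \<Rightarrow> nat \<Rightarrow> ('x list \<times> 'y list) pmf" where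
  "component c = joint_src (PX (fst c)) (W (fst c) (snd c))"

definition mix :: "nat \<Rightarrow> ('x list \<times> 'y list) pmf" where
  "mix n = bind_pmf \<alpha> (\<lambda>c. component c n)"

definition wt :: "nat \<times> nat \<Rightarrow> real" where "wt c = pmf \<alpha> c"

definition wt_row :: "nat \<Rightarrow> real" where "wt_row i = (\<Sum>j<mm i. pmf \<alpha> (i, j))"

definition H_comp :: "nat \<times> nat \<Rightarrow> real" where "H_comp c = cond_entropy_rate (component c)"

definition Hmax :: "nat \<Rightarrow> real" where "Hmax i = Max {H_comp (i, j) | j. j < mm i}"

definition H_mix :: real where "H_mix = (\<Sum>i<m. wt_row i * Hmax i)"

lemma mem_C: "c \<in> C \<longleftrightarrow> fst c < m \<and> snd c < mm (fst c)"
  using alpha_supp by (cases c) auto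

lemma C_eq_Sigma: "C = Sigma {..<m} (\<lambda>i. {..<mm i})"
  using alpha_supp by auto

lemma finite_C: "finite C"
  unfolding C_eq_Sigma by auto

lemma wt_pos: "c \<in> C \<Longrightarrow> 0 < wt c"
  by (simp add: wt_def pmf_positive)

lemma wt_le_1: "wt c \<le> 1"
  by (simp add: wt_def pmf_le_1)

lemma wt_nonneg: "0 \<le> wt c"
  by (simp add: wt_def)

lemma sum_wt: "(\<Sum>c\<in>C. wt c) = 1"
proof -
  have "(\<Sum>c\<in>C. wt c) = measure_pmf.prob \<alpha> C"
    unfolding wt_def by (subst measure_measure_pmf_finite[OF finite_C]) simp
  also have "\<dots> = 1" by (simp add: measure_pmf.prob_eq_1 AE_measure_pmf)
  finally show ?thesis .
qed

lemma sum_C_wt_fst: "(\<Sum>c\<in>C. wt c * f (fst c)) = (\<Sum>i<m. wt_row i * f i)"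
proof -
  have "(\<Sum>c\<in>C. wt c * f (fst c)) = (\<Sum>i<m. \<Sum>j<mm i. wt (i, j) * f i)"
    unfolding C_eq_Sigma by (simp add: sum.Sigma split_def)
  then show ?thesis by (simp add: wt_row_def wt_def sum_distrib_right)
qed

lemma wt_row_pos: "i < m \<Longrightarrow> 0 < wt_row i"
proof -
  assume i: "i < m"
  then have "0 < pmf \<alpha> (i, 0)" using mm_pos by (simp add: pmf_positive mem_C)
  also have "pmf \<alpha> (i, 0) \<le> wt_row i" unfolding wt_row_def
    using mm_pos i by (intro member_le_sum) auto
  finally show ?thesis .
qed

lemma component_uniformly_integrable: "c \<in> C \<Longrightarrow> src_uniformly_integrable (component c)"
  using UI by (auto simp: mem_C component_def)

lemma H_comp_concentration:
  assumes "c \<in> C"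
  shows "0 \<le> H_comp c"
    "\<And>\<gamma>. \<gamma> > 0 \<Longrightarrow> (\<lambda>n. measure_pmf.prob (component c n)
        {p. H_comp c + \<gamma> < Zfun (component c) n p}) \<longlonglongrightarrow> 0"
    "\<And>\<gamma>. \<gamma> > 0 \<Longrightarrow> (\<lambda>n. measure_pmf.prob (component c n)
        {p. Zfun (component c) n p < H_comp c - \<gamma>}) \<longlonglongrightarrow> 0"
proof -
  have "cond_strong_converse (component c)"
    using SC assms by (auto simp: mem_C component_def)
  from cond_entropy_rate_concentration[OF component_uniformly_integrable[OF assms] this] show "0 \<le> H_comp c"
    "\<And>\<gamma>. \<gamma> > 0 \<Longrightarrow> (\<lambda>n. measure_pmf.prob (component c n)
        {p. H_comp c + \<gamma> < Zfun (component c) n p}) \<longlonglongrightarrow> 0"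
    "\<And>\<gamma>. \<gamma> > 0 \<Longrightarrow> (\<lambda>n. measure_pmf.prob (component c n)
        {p. Zfun (component c) n p < H_comp c - \<gamma>}) \<longlonglongrightarrow> 0"
    unfolding H_comp_def by auto
qed

lemma H_comp_le_Hmax: "j < mm i \<Longrightarrow> H_comp (i, j) \<le> Hmax i"
  unfolding Hmax_def by (rule Max_ge) auto

lemma Hmax_attained: "i < m \<Longrightarrow> \<exists>j<mm i. H_comp (i, j) = Hmax i"
proof -
  assume "i < m"
  then have "Hmax i \<in> {H_comp (i, j) | j. j < mm i}"
    unfolding Hmax_def using mm_pos by (intro Max_in) auto
  then show ?thesis by auto
qed

definition argmax_comp :: "nat \<Rightarrow> nat" where
  "argmax_comp i = (SOME j. j < mm i \<and> H_comp (i, j) = Hmax i)"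

lemma argmax_comp: "i < m \<Longrightarrow> (i, argmax_comp i) \<in> C \<and> H_comp (i, argmax_comp i) = Hmax i"
  unfolding argmax_comp_def mem_C using someI_ex[OF Hmax_attained] by auto

lemma Hmax_nonneg: "i < m \<Longrightarrow> 0 \<le> Hmax i"
  using argmax_comp H_comp_concentration(1) by metis

lemma H_mix_nonneg: "0 \<le> H_mix"
  unfolding H_mix_def using wt_row_pos Hmax_nonneg by (intro sum_nonneg mult_nonneg_nonneg) (auto simp: less_imp_le)

lemma map_fst_mix: "map_pmf fst (mix n) = bind_pmf \<alpha> (\<lambda>c. PX (fst c) n)"
  unfolding mix_def map_bind_pmf component_def map_fst_joint_src ..

lemma pmf_map_fst_mix: "pmf (map_pmf fst (mix n)) x = (\<Sum>c\<in>C. wt c * pmf (PX (fst c) n) x)"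
  unfolding map_fst_mix by (simp add: pmf_bind_pmf_finite[OF finite_C] wt_def)

lemma prob_mix_fst:
  "measure_pmf.prob (mix n) {p. fst p = x \<and> Q p} =
   (\<Sum>c\<in>C. wt c * pmf (PX (fst c) n) x * measure_pmf.prob (W (fst c) (snd c) n x) {y. Q (x, y)})"
  unfolding mix_def prob_bind_pmf_finite[OF finite_C] component_def prob_joint_src_fst
  by (simp add: wt_def mult_ac)

lemma wt_pmf_component_le_pmf_mix: "wt c * pmf (component c n) p \<le> pmf (mix n) p"
  unfolding mix_def wt_def by (rule pmf_bind_pmf_ge[OF finite_C])

lemma pmf_mix_pos: "c \<in> C \<Longrightarrow> p \<in> set_pmf (component c n) \<Longrightarrow> 0 < pmf (mix n) p"
  using wt_pos[of c] wt_pmf_component_le_pmf_mix[of c n p]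
  by (simp add: set_pmf_eq') (meson mult_pos_pos less_le_trans)

lemma nn_integral_mix:
  "(\<integral>\<^sup>+p. f p \<partial>measure_pmf (mix n)) = (\<Sum>c\<in>C. ennreal (wt c) * (\<integral>\<^sup>+p. f p \<partial>measure_pmf (component c n)))"
  unfolding mix_def wt_def by (rule nn_integral_bind_pmf_finite[OF finite_C])

lemma nn_integral_map_fst_mix:
  "(\<integral>\<^sup>+x. f x \<partial>measure_pmf (map_pmf fst (mix n))) =
   (\<Sum>c\<in>C. ennreal (wt c) * (\<integral>\<^sup>+x. f x \<partial>measure_pmf (PX (fst c) n)))"
  unfolding map_fst_mix wt_def by (rule nn_integral_bind_pmf_finite[OF finite_C])

lemma pmf_map_fst_mix_pos: "length x = n \<Longrightarrow> 0 < pmf (map_pmf fst (mix n)) x"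
proof -
  assume len: "length x = n"
  obtain c where c: "c \<in> C" using set_pmf_not_empty[of \<alpha>] by blast
  then have "0 < pmf (PX (fst c) n) x" using len PX_pos by (auto simp: mem_C)
  then have "0 < wt c * pmf (PX (fst c) n) x" using wt_pos[OF c] by simp
  also have "\<dots> \<le> (\<Sum>c\<in>C. wt c * pmf (PX (fst c) n) x)"
    using c finite_C by (intro member_le_sum) (auto simp: wt_nonneg)
  finally show ?thesis by (simp add: pmf_map_fst_mix)
qed

lemma wt_row_pmf_le_pmf_map_fst_mix:
  assumes i: "i < m"
  shows "wt_row i * pmf (PX i n) x \<le> pmf (map_pmf fst (mix n)) x"
proof -
  have "wt_row i * pmf (PX i n) x = (\<Sum>c\<in>Pair i ` {..<mm i}. wt c * pmf (PX (fst c) n) x)"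
    by (simp add: sum.reindex inj_on_def wt_row_def wt_def sum_distrib_right)
  also have "\<dots> \<le> (\<Sum>c\<in>C. wt c * pmf (PX (fst c) n) x)"
    using i by (intro sum_mono2[OF finite_C]) (auto simp: mem_C wt_nonneg)
  finally show ?thesis by (simp add: pmf_map_fst_mix)
qed

subsection \<open>Typical sequences are dominated by a single marginal\<close>

lemma divergence_margin_exists:
  "\<exists>\<delta>>0. \<forall>i<m. \<forall>k<m. i \<noteq> k \<longrightarrow> (\<lambda>n. measure_pmf.prob (PX i n)
     {x. (1 / real n) * log 2 (pmf (PX i n) x / pmf (PX k n) x) < \<delta>}) \<longlonglongrightarrow> 0"
proof -
  have "eventually (\<lambda>\<delta>. \<forall>q\<in>{..<m} \<times> {..<m}. fst q \<noteq> snd q \<longrightarrow> (\<lambda>n. measure_pmf.prob (PX (fst q) n)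
     {x. (1 / real n) * log 2 (pmf (PX (fst q) n) x / pmf (PX (snd q) n) x) < \<delta>}) \<longlonglongrightarrow> 0) (at_right 0)"
  proof (intro eventually_ball_finite ballI)
    fix q :: "nat \<times> nat" assume "q \<in> {..<m} \<times> {..<m}"
    show "eventually (\<lambda>\<delta>. fst q \<noteq> snd q \<longrightarrow> (\<lambda>n. measure_pmf.prob (PX (fst q) n)
       {x. (1 / real n) * log 2 (pmf (PX (fst q) n) x / pmf (PX (snd q) n) x) < \<delta>}) \<longlonglongrightarrow> 0) (at_right 0)"
    proof (cases "fst q = snd q")
      case False
      with D_pos \<open>q \<in> _\<close> have "D_lower (PX (fst q)) (PX (snd q)) > 0" by auto
      from D_lower_pos_eventually[OF this] show ?thesis by (rule eventually_mono) blast
    qed simp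
  qed simp
  then have "eventually (\<lambda>\<delta>. 0 < \<delta> \<and> (\<forall>i<m. \<forall>k<m. i \<noteq> k \<longrightarrow> (\<lambda>n. measure_pmf.prob (PX i n)
     {x. (1 / real n) * log 2 (pmf (PX i n) x / pmf (PX k n) x) < \<delta>}) \<longlonglongrightarrow> 0)) (at_right 0)"
    using eventually_at_right_less[of 0] by eventually_elim auto
  then show ?thesis by (auto dest: eventually_happens'[rotated])
qed

definition \<delta> :: real where
  "\<delta> = (SOME \<delta>. \<delta> > 0 \<and> (\<forall>i<m. \<forall>k<m. i \<noteq> k \<longrightarrow> (\<lambda>n. measure_pmf.prob (PX i n)
     {x. (1 / real n) * log 2 (pmf (PX i n) x / pmf (PX k n) x) < \<delta>}) \<longlonglongrightarrow> 0))"

lemma delta_pos: "0 < \<delta>"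
  and prob_divergence_below_delta: "i < m \<Longrightarrow> k < m \<Longrightarrow> i \<noteq> k \<Longrightarrow> (\<lambda>n. measure_pmf.prob (PX i n)
     {x. (1 / real n) * log 2 (pmf (PX i n) x / pmf (PX k n) x) < \<delta>}) \<longlonglongrightarrow> 0"
  using someI_ex[OF divergence_margin_exists] unfolding \<delta>_def[symmetric] by auto

definition dominant :: "nat \<Rightarrow> nat \<Rightarrow> 'x list \<Rightarrow> bool" where
  "dominant n i x \<longleftrightarrow> length x = n \<and>
     (\<forall>k<m. k \<noteq> i \<longrightarrow> 2 powr (real n * \<delta>) * pmf (PX k n) x \<le> pmf (PX i n) x)"

lemma dominant_small:
  "dominant n i x \<Longrightarrow> k < m \<Longrightarrow> k \<noteq> i \<Longrightarrow> pmf (PX k n) x \<le> 2 powr (- (real n * \<delta>)) * pmf (PX i n) x"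
  by (auto simp: dominant_def powr_minus field_simps)

lemma dominant_le: "dominant n i x \<Longrightarrow> k < m \<Longrightarrow> pmf (PX k n) x \<le> pmf (PX i n) x"
proof (cases "k = i")
  case False
  assume "dominant n i x" "k < m"
  then have "2 powr (real n * \<delta>) * pmf (PX k n) x \<le> pmf (PX i n) x"
    using False by (auto simp: dominant_def)
  moreover have "1 \<le> 2 powr (real n * \<delta>)" using delta_pos by (intro ge_one_powr_ge_zero) auto
  ultimately show ?thesis by (meson order_trans mult_le_cancel_right1 not_less pmf_nonneg)
qed simp

lemma pmf_map_fst_mix_le_dominant:
  assumes "dominant n i x"
  shows "pmf (map_pmf fst (mix n)) x \<le> pmf (PX i n) x"
proof -
  have "pmf (map_pmf fst (mix n)) x \<le> (\<Sum>c\<in>C. wt c * pmf (PX i n) x)"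
    unfolding pmf_map_fst_mix
    using assms by (intro sum_mono mult_left_mono dominant_le) (auto simp: mem_C wt_nonneg)
  also have "\<dots> = pmf (PX i n) x" by (simp add: sum_distrib_right[symmetric] sum_wt)
  finally show ?thesis .
qed

lemma not_dominant_imp:
  assumes "\<not> dominant n i x" "i < m" "length x = n"
  shows "\<exists>k<m. k \<noteq> i \<and> (1 / real n) * log 2 (pmf (PX i n) x / pmf (PX k n) x) < \<delta>"
proof (rule ccontr)
  assume far: "\<not> ?thesis"
  have "2 powr (real n * \<delta>) * pmf (PX k n) x \<le> pmf (PX i n) x" if k: "k < m" "k \<noteq> i" for k
  proof (cases "n = 0")
    case True
    then show ?thesis using far k delta_pos by auto
  next
    case False
    have pk: "pmf (PX k n) x > 0" and pi: "pmf (PX i n) x > 0" using PX_pos assms k by auto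
    have "\<delta> \<le> (1 / real n) * log 2 (pmf (PX i n) x / pmf (PX k n) x)" using far k by auto
    then have "real n * \<delta> \<le> log 2 (pmf (PX i n) x / pmf (PX k n) x)"
      using False by (simp add: field_simps)
    then have "2 powr (real n * \<delta>) \<le> pmf (PX i n) x / pmf (PX k n) x"
      using pk pi by (simp add: le_log_iff)
    then show ?thesis using pk by (simp add: field_simps)
  qed
  then show False using assms by (simp add: dominant_def)
qed

lemma prob_not_dominant_tendsto_0:
  assumes i: "i < m"
  shows "(\<lambda>n. measure_pmf.prob (PX i n) {x. \<not> dominant n i x}) \<longlonglongrightarrow> 0"
proof -
  define D where "D k n = {x. (1 / real n) * log 2 (pmf (PX i n) x / pmf (PX k n) x) < \<delta>}" for k n
  have "(\<lambda>n. measure_pmf.prob (PX i n) ({x. length x \<noteq> n} \<union> (\<Union>k\<in>{k. k < m \<and> k \<noteq> i}. D k n))) \<longlonglongrightarrow> 0"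
  proof (rule prob_tendsto_0_Un)
    have "measure_pmf.prob (PX i n) {x. length x \<noteq> n} = 0" for n
      using PX_len i by (subst measure_pmf_zero_iff) auto
    then show "(\<lambda>n. measure_pmf.prob (PX i n) {x. length x \<noteq> n}) \<longlonglongrightarrow> 0" by simp
    show "(\<lambda>n. measure_pmf.prob (PX i n) (\<Union>k\<in>{k. k < m \<and> k \<noteq> i}. D k n)) \<longlonglongrightarrow> 0"
      using i prob_divergence_below_delta unfolding D_def by (intro prob_tendsto_0_UN) (simp, blast)
  qed
  then show ?thesis
    by (rule prob_tendsto_0_subset) (use not_dominant_imp[OF _ i] in \<open>auto simp: D_def\<close>)
qed

subsection \<open>Lower bound\<close>

lemma epsilon_lt_1:
  assumes "\<forall>c\<in>C. 2 * \<epsilon> < wt c" "0 < \<epsilon>"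
  shows "\<epsilon> < 1"
proof -
  obtain c where "c \<in> C" using set_pmf_not_empty[of \<alpha>] by blast
  with assms wt_le_1[of c] show ?thesis by force
qed

lemma prob_self_info_mix_low_le:
  assumes c: "c \<in> C" and n: "n \<ge> 1"
  shows "measure_pmf.prob (component c n) {p. self_info (mix n) p < real n * (H_comp c - 2 * \<gamma>)}
    \<le> 2 powr (- (real n * \<gamma>)) + measure_pmf.prob (component c n) {p. Zfun (component c) n p < H_comp c - \<gamma>}"
proof -
  have "{p. self_info (mix n) p < real n * (H_comp c - 2 * \<gamma>)} \<subseteq>
      {p. self_info (mix n) p < self_info (component c n) p - real n * \<gamma>} \<union>
      {p. Zfun (component c) n p < H_comp c - \<gamma>}"
  proof (intro subsetI UnCI)
    fix p assume low: "p \<in> {p. self_info (mix n) p < real n * (H_comp c - 2 * \<gamma>)}"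
      and "p \<notin> {p. Zfun (component c) n p < H_comp c - \<gamma>}"
    then have "real n * (H_comp c - \<gamma>) \<le> real n * Zfun (component c) n p"
      by (intro mult_left_mono) auto
    also have "\<dots> = self_info (component c n) p" using n by (simp add: Zfun_eq_self_info)
    finally show "p \<in> {p. self_info (mix n) p < self_info (component c n) p - real n * \<gamma>}"
      using low by (simp add: algebra_simps)
  qed
  then have "measure_pmf.prob (component c n) {p. self_info (mix n) p < real n * (H_comp c - 2 * \<gamma>)}
      \<le> measure_pmf.prob (component c n)
        ({p. self_info (mix n) p < self_info (component c n) p - real n * \<gamma>} \<union>
         {p. Zfun (component c) n p < H_comp c - \<gamma>})"
    by (rule measure_pmf.finite_measure_mono) simp
  also have "\<dots> \<le> measure_pmf.prob (component c n)
        {p. self_info (mix n) p < self_info (component c n) p - real n * \<gamma>}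
      + measure_pmf.prob (component c n) {p. Zfun (component c) n p < H_comp c - \<gamma>}"
    by (rule measure_Un_le) simp_all
  also have "measure_pmf.prob (component c n)
      {p. self_info (mix n) p < self_info (component c n) p - real n * \<gamma>} \<le> 2 powr (- (real n * \<gamma>))"
    by (rule prob_self_info_gap_le) (rule pmf_mix_pos[OF c])
  finally show ?thesis by simp
qed

definition good_lower :: "real \<Rightarrow> nat \<Rightarrow> nat \<Rightarrow> 'x list set" where
  "good_lower \<gamma> n i = {x. dominant n i x \<and> measure_pmf.prob (W i (argmax_comp i) n x)
     {y. self_info (mix n) (x, y) \<le> real n * (Hmax i - \<gamma>)} < 1/2}"

lemma hbar_lower_bound:
  assumes eps: "0 < \<epsilon>" "\<forall>c\<in>C. 2 * \<epsilon> < wt c" and i: "i < m" and x: "x \<in> good_lower \<gamma> n i"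
  shows "real n * (Hmax i - \<gamma>) \<le> hbar (mix n) \<epsilon> x"
proof -
  define c where "c = (i, argmax_comp i)"
  define t where "t = real n * (Hmax i - \<gamma>)"
  define q where "q = measure_pmf.prob (W i (argmax_comp i) n x) {y. t < self_info (mix n) (x, y)}"
  define E where "E = measure_pmf.prob (mix n) {p. fst p = x \<and> t < self_info (mix n) p}"
  have c: "c \<in> C" using argmax_comp[OF i] by (simp add: c_def)
  have dom: "dominant n i x" using x by (simp add: good_lower_def)
  then have len: "length x = n" by (simp add: dominant_def)
  have PX: "0 < pmf (map_pmf fst (mix n)) x" "0 < pmf (PX i n) x"
    using pmf_map_fst_mix_pos[OF len] PX_pos i len by auto
  have "1 - q < 1/2"
    using x prob_Collect_not[of "W i (argmax_comp i) n x" "\<lambda>y. t < self_info (mix n) (x, y)"]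
    by (simp add: good_lower_def q_def t_def not_less)
  then have "wt c * (1/2) < wt c * q" using wt_pos[OF c] by (intro mult_strict_left_mono) auto
  moreover have "2 * \<epsilon> < wt c" using eps(2) c by blast
  ultimately have "\<epsilon> < wt c * q" by simp
  have "wt c * pmf (PX i n) x * q
      = wt c * pmf (PX (fst c) n) x * measure_pmf.prob (W (fst c) (snd c) n x) {y. t < self_info (mix n) (x, y)}"
    by (simp add: c_def q_def)
  also have "\<dots> \<le> E"
    unfolding E_def prob_mix_fst by (rule member_le_sum) (simp_all add: c finite_C wt_nonneg)
  finally have num: "wt c * pmf (PX i n) x * q \<le> E" .
  have "wt c * q = wt c * pmf (PX i n) x * q / pmf (PX i n) x" using PX(2) by simp
  also have "\<dots> \<le> E / pmf (PX i n) x" using num PX(2) by (intro divide_right_mono) auto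
  also have "\<dots> \<le> E / pmf (map_pmf fst (mix n)) x"
    using PX pmf_map_fst_mix_le_dominant[OF dom] by (intro divide_left_mono) (auto simp: E_def)
  also have "\<dots> = cond_tail (mix n) x t" by (simp add: E_def cond_tail_def)
  finally have "\<epsilon> < cond_tail (mix n) x t" using \<open>\<epsilon> < wt c * q\<close> by linarith
  from hbar_ge[OF this eps(1) PX(1)] show ?thesis by (simp add: t_def)
qed

lemma prob_not_good_lower_tendsto_0:
  assumes i: "i < m" and g: "\<gamma> > 0"
  shows "(\<lambda>n. measure_pmf.prob (PX i n) {x. x \<notin> good_lower \<gamma> n i}) \<longlonglongrightarrow> 0"
proof -
  define c where "c = (i, argmax_comp i)"
  have c: "c \<in> C" "H_comp c = Hmax i" using argmax_comp[OF i] by (simp_all add: c_def)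
  define Q where "Q n p \<longleftrightarrow> self_info (mix n) p \<le> real n * (Hmax i - \<gamma>)" for n p
  define g where "g n = 2 * (2 powr (- (real n * (\<gamma> / 3)))
    + measure_pmf.prob (component c n) {p. Zfun (component c) n p < H_comp c - \<gamma> / 3})" for n
  have "(\<lambda>n. measure_pmf.prob (PX i n)
      ({x. \<not> dominant n i x} \<union> {x. 1/2 \<le> measure_pmf.prob (W i (argmax_comp i) n x) {y. Q n (x, y)}})) \<longlonglongrightarrow> 0"
  proof (rule prob_tendsto_0_Un[OF prob_not_dominant_tendsto_0[OF i] prob_tendsto_0_bound])
    show "g \<longlonglongrightarrow> 0"
      unfolding g_def using g
      by (intro tendsto_mult_right_zero tendsto_add_zero tendsto_powr_neg_mult H_comp_concentration(3)[OF c(1)]) auto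
    show "eventually (\<lambda>n. measure_pmf.prob (PX i n) {x. 1/2 \<le> measure_pmf.prob (W i (argmax_comp i) n x)
        {y. Q n (x, y)}} \<le> g n) sequentially"
      using eventually_ge_at_top[of 1]
    proof eventually_elim
      case (elim n)
      have "{p. Q n p} \<subseteq> {p. self_info (mix n) p < real n * (H_comp c - 2 * (\<gamma> / 3))}"
        using elim g c(2) by (auto simp: Q_def intro: le_less_trans mult_strict_left_mono)
      then have "measure_pmf.prob (component c n) {p. Q n p}
          \<le> measure_pmf.prob (component c n) {p. self_info (mix n) p < real n * (H_comp c - 2 * (\<gamma> / 3))}"
        by (rule measure_pmf.finite_measure_mono) simp
      also have "\<dots> \<le> g n / 2"
        using prob_self_info_mix_low_le[OF c(1) elim, of "\<gamma> / 3"] by (simp add: g_def)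
      finally have "measure_pmf.prob (component c n) {p. Q n p} \<le> g n / 2" .
      then show ?case
        using prob_cond_prob_ge_le[of "1/2" "PX i" n "W i (argmax_comp i)" "Q n"]
        by (simp add: component_def c_def)
    qed
  qed
  then show ?thesis by (rule prob_tendsto_0_subset) (auto simp: good_lower_def Q_def)
qed

lemma nn_integral_hbar_ge_good_lower:
  assumes eps: "0 < \<epsilon>" "\<forall>c\<in>C. 2 * \<epsilon> < wt c" and i: "i < m"
  shows "ennreal (real n * max 0 (Hmax i - \<gamma>) * measure_pmf.prob (PX i n) (good_lower \<gamma> n i))
    \<le> (\<integral>\<^sup>+x. ennreal (hbar (mix n) \<epsilon> x) \<partial>measure_pmf (PX i n))"
proof -
  have "ennreal (real n * max 0 (Hmax i - \<gamma>) * measure_pmf.prob (PX i n) (good_lower \<gamma> n i)) =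
      (\<integral>\<^sup>+x. ennreal (real n * max 0 (Hmax i - \<gamma>)) * indicator (good_lower \<gamma> n i) x \<partial>measure_pmf (PX i n))"
    by (simp add: nn_integral_cmult measure_pmf.emeasure_eq_measure ennreal_mult)
  also have "\<dots> \<le> (\<integral>\<^sup>+x. ennreal (hbar (mix n) \<epsilon> x) \<partial>measure_pmf (PX i n))"
  proof (intro nn_integral_mono_AE AE_pmfI)
    fix x assume "x \<in> set_pmf (PX i n)"
    then have "0 \<le> hbar (mix n) \<epsilon> x"
      using PX_len i eps by (intro hbar_nonneg pmf_map_fst_mix_pos epsilon_lt_1) auto
    then show "ennreal (real n * max 0 (Hmax i - \<gamma>)) * indicator (good_lower \<gamma> n i) x
        \<le> ennreal (hbar (mix n) \<epsilon> x)"
      using hbar_lower_bound[OF eps i, of x \<gamma> n]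
      by (auto simp: indicator_def max_def intro!: ennreal_leI)
  qed
  finally show ?thesis .
qed

lemma eventually_Hs_eps_lower:
  assumes eps: "0 < \<epsilon>" "\<forall>c\<in>C. 2 * \<epsilon> < wt c" and g: "\<gamma> > 0"
  shows "eventually (\<lambda>n. ennreal (H_mix - 2 * \<gamma>) \<le> ennreal (1 / real n) * Hs_eps mix \<epsilon> n) sequentially"
proof -
  define h where "h c = wt c * max 0 (Hmax (fst c) - \<gamma>)" for c
  define r where "r n = (\<Sum>c\<in>C. h c * measure_pmf.prob (PX (fst c) n) (good_lower \<gamma> n (fst c)))" for n
  have h: "0 \<le> h c" for c by (simp add: h_def wt_nonneg)
  have r_le: "ennreal (r n) \<le> ennreal (1 / real n) * Hs_eps mix \<epsilon> n" if n: "n \<ge> 1" for n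
  proof -
    have "ennreal (r n) = ennreal (1 / real n) * (\<Sum>c\<in>C. ennreal (wt c) *
        ennreal (real n * max 0 (Hmax (fst c) - \<gamma>) * measure_pmf.prob (PX (fst c) n) (good_lower \<gamma> n (fst c))))"
      using n h unfolding r_def
      by (simp add: sum_distrib_left ennreal_mult[symmetric] wt_nonneg h_def mult_ac flip: sum_ennreal)
    also have "\<dots> \<le> ennreal (1 / real n) * Hs_eps mix \<epsilon> n"
      unfolding Hs_eps_def nn_integral_map_fst_mix
      using nn_integral_hbar_ge_good_lower[OF eps] by (intro mult_left_mono sum_mono) (auto simp: mem_C)
    finally show ?thesis .
  qed
  have "(\<lambda>n. measure_pmf.prob (PX i n) (good_lower \<gamma> n i)) \<longlonglongrightarrow> 1" if "i < m" for i
  proof -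
    have "measure_pmf.prob (PX i n) (good_lower \<gamma> n i) = 1 - measure_pmf.prob (PX i n) {x. x \<notin> good_lower \<gamma> n i}"
      for n using prob_Collect_not[of "PX i n" "\<lambda>x. x \<in> good_lower \<gamma> n i"] by simp
    then show ?thesis using tendsto_diff[OF tendsto_const prob_not_good_lower_tendsto_0[OF that g], of 1] by simp
  qed
  then have "r \<longlonglongrightarrow> (\<Sum>c\<in>C. h c * 1)"
    unfolding r_def by (intro tendsto_sum tendsto_mult tendsto_const) (auto simp: mem_C)
  moreover have "H_mix - \<gamma> \<le> (\<Sum>c\<in>C. h c)"
  proof -
    have "H_mix - \<gamma> = (\<Sum>c\<in>C. wt c * (Hmax (fst c) - \<gamma>))"
      by (simp add: H_mix_def sum_C_wt_fst[symmetric] sum_wt algebra_simps sum_subtractf sum_distrib_left[symmetric])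
    also have "\<dots> \<le> (\<Sum>c\<in>C. h c)" unfolding h_def by (intro sum_mono mult_left_mono) (auto simp: wt_nonneg)
    finally show ?thesis .
  qed
  ultimately have "eventually (\<lambda>n. H_mix - 2 * \<gamma> < r n) sequentially"
    using g by (intro order_tendstoD) auto
  with eventually_ge_at_top[of 1] show ?thesis
    by eventually_elim (rule order_trans[OF ennreal_leI r_le], auto)
qed

subsection \<open>Upper bound\<close>

definition good_upper :: "real \<Rightarrow> real \<Rightarrow> nat \<Rightarrow> nat \<Rightarrow> 'x list set" where
  "good_upper \<gamma> \<epsilon> n i = {x. dominant n i x \<and> (\<forall>l<mm i. measure_pmf.prob (W i l n x)
     {y. real n * (Hmax i + \<gamma>) < self_info (mix n) (x, y)} \<le> \<epsilon> / 2)}"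

text \<open>On a sequence dominated by i, the components (k, l) with k \<noteq> i carry at most a fraction
  2^(-n\<delta>) of the mass of X_i, whatever their conditional tails.\<close>

lemma prob_mix_fst_tail_le:
  assumes "0 \<le> \<epsilon>" and dom: "dominant n i x"
    and tail: "\<And>l. l < mm i \<Longrightarrow> measure_pmf.prob (W i l n x) {y. t < self_info (mix n) (x, y)} \<le> \<epsilon> / 2"
  shows "measure_pmf.prob (mix n) {p. fst p = x \<and> t < self_info (mix n) p}
    \<le> \<epsilon> / 2 * pmf (map_pmf fst (mix n)) x + 2 powr (- (real n * \<delta>)) * pmf (PX i n) x"
proof -
  define q where "q c = measure_pmf.prob (W (fst c) (snd c) n x) {y. t < self_info (mix n) (x, y)}" for c
  have "wt c * pmf (PX (fst c) n) x * q c
      \<le> \<epsilon> / 2 * (wt c * pmf (PX (fst c) n) x) + 2 powr (- (real n * \<delta>)) * (wt c * pmf (PX i n) x)"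
    if c: "c \<in> C" for c
  proof (cases "fst c = i")
    case True
    then have "q c \<le> \<epsilon> / 2" using tail[of "snd c"] c by (simp add: q_def mem_C)
    then have "wt c * pmf (PX (fst c) n) x * q c \<le> wt c * pmf (PX (fst c) n) x * (\<epsilon> / 2)"
      by (intro mult_left_mono) (simp_all add: wt_nonneg)
    then have "wt c * pmf (PX (fst c) n) x * q c \<le> \<epsilon> / 2 * (wt c * pmf (PX (fst c) n) x)"
      by (simp only: mult.commute)
    then show ?thesis by (simp add: add_increasing2 wt_nonneg)
  next
    case False
    have "wt c * pmf (PX (fst c) n) x * q c \<le> wt c * pmf (PX (fst c) n) x"
      by (intro mult_left_le) (auto simp: q_def wt_nonneg)
    also have "\<dots> \<le> 2 powr (- (real n * \<delta>)) * (wt c * pmf (PX i n) x)"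
      using dominant_small[OF dom _ False] c by (simp add: mem_C mult_left_mono wt_nonneg mult.left_commute)
    finally show ?thesis using assms(1) by (simp add: add_increasing wt_nonneg)
  qed
  then have "measure_pmf.prob (mix n) {p. fst p = x \<and> t < self_info (mix n) p}
      \<le> (\<Sum>c\<in>C. \<epsilon> / 2 * (wt c * pmf (PX (fst c) n) x) + 2 powr (- (real n * \<delta>)) * (wt c * pmf (PX i n) x))"
    unfolding prob_mix_fst q_def[symmetric] by (rule sum_mono)
  also have "\<dots> = \<epsilon> / 2 * pmf (map_pmf fst (mix n)) x + 2 powr (- (real n * \<delta>)) * pmf (PX i n) x"
    unfolding sum.distrib pmf_map_fst_mix sum_distrib_left[symmetric]
    by (simp add: sum_distrib_right[symmetric] sum_wt)
  finally show ?thesis .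
qed

lemma hbar_upper_bound:
  assumes eps: "0 < \<epsilon>" "\<epsilon> < 1" and i: "i < m" and x: "x \<in> good_upper \<gamma> \<epsilon> n i"
    and small: "2 powr (- (real n * \<delta>)) \<le> \<epsilon> * wt_row i / 2"
  shows "hbar (mix n) \<epsilon> x \<le> real n * (Hmax i + \<gamma>)"
proof -
  have dom: "dominant n i x" using x by (simp add: good_upper_def)
  then have PX: "0 < pmf (map_pmf fst (mix n)) x" by (simp add: dominant_def pmf_map_fst_mix_pos)
  have "2 powr (- (real n * \<delta>)) * pmf (PX i n) x \<le> \<epsilon> * wt_row i / 2 * pmf (PX i n) x"
    by (rule mult_right_mono[OF small pmf_nonneg])
  also have "\<dots> = \<epsilon> / 2 * (wt_row i * pmf (PX i n) x)" by simp
  also have "\<dots> \<le> \<epsilon> / 2 * pmf (map_pmf fst (mix n)) x"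
    using wt_row_pmf_le_pmf_map_fst_mix[OF i] eps by (intro mult_left_mono) auto
  moreover have "measure_pmf.prob (mix n) {p. fst p = x \<and> real n * (Hmax i + \<gamma>) < self_info (mix n) p}
      \<le> \<epsilon> / 2 * pmf (map_pmf fst (mix n)) x + 2 powr (- (real n * \<delta>)) * pmf (PX i n) x"
    using eps x by (intro prob_mix_fst_tail_le[OF _ dom]) (auto simp: good_upper_def)
  ultimately have "measure_pmf.prob (mix n) {p. fst p = x \<and> real n * (Hmax i + \<gamma>) < self_info (mix n) p}
      \<le> \<epsilon> * pmf (map_pmf fst (mix n)) x"
    by linarith
  then have "cond_tail (mix n) x (real n * (Hmax i + \<gamma>)) \<le> \<epsilon>"
    using PX by (simp add: cond_tail_def pos_divide_le_eq)
  then show ?thesis by (rule hbar_le[OF _ eps(2) PX])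
qed

lemma prob_self_info_mix_high_le:
  assumes c: "c \<in> C" and n: "n \<ge> 1" and wt: "log 2 (1 / wt c) \<le> real n * \<gamma>"
  shows "measure_pmf.prob (component c n) {p. real n * (H_comp c + 3 * \<gamma>) < self_info (mix n) p}
    \<le> measure_pmf.prob (component c n) {p. H_comp c + \<gamma> < Zfun (component c) n p} + 2 powr (- (real n * \<gamma>))"
proof -
  define ratio where "ratio y = log 2 (pmf (map_pmf snd (mix n)) y / pmf (map_pmf snd (component c n)) y)" for y
  have "measure_pmf.prob (component c n) {p. real n * (H_comp c + 3 * \<gamma>) < self_info (mix n) p}
      \<le> measure_pmf.prob (component c n)
          ({p. H_comp c + \<gamma> < Zfun (component c) n p} \<union> {p. real n * \<gamma> < ratio (snd p)})"
  proof (rule prob_mono_on_support)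
    fix p assume "p \<in> set_pmf (component c n)"
      and high: "p \<in> {p. real n * (H_comp c + 3 * \<gamma>) < self_info (mix n) p}"
    then have dom: "self_info (mix n) p \<le> self_info (component c n) p + log 2 (1 / wt c) + ratio (snd p)"
      unfolding ratio_def
      by (intro self_info_dominated_le[OF wt_pmf_component_le_pmf_mix wt_pos[OF c]]) (simp add: set_pmf_eq')
    show "p \<in> {p. H_comp c + \<gamma> < Zfun (component c) n p} \<union> {p. real n * \<gamma> < ratio (snd p)}"
    proof (rule ccontr)
      assume "p \<notin> {p. H_comp c + \<gamma> < Zfun (component c) n p} \<union> {p. real n * \<gamma> < ratio (snd p)}"
      then have Z: "Zfun (component c) n p \<le> H_comp c + \<gamma>" and r: "ratio (snd p) \<le> real n * \<gamma>"
        by auto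
      have "self_info (component c n) p = real n * Zfun (component c) n p"
        using n by (simp add: Zfun_eq_self_info)
      also have "\<dots> \<le> real n * (H_comp c + \<gamma>)" using Z by (intro mult_left_mono) auto
      finally have "self_info (mix n) p \<le> real n * (H_comp c + 3 * \<gamma>)"
        using dom wt r by (simp add: algebra_simps)
      then show False using high by simp
    qed
  qed
  also have "\<dots> \<le> measure_pmf.prob (component c n) {p. H_comp c + \<gamma> < Zfun (component c) n p}
      + measure_pmf.prob (component c n) {p. real n * \<gamma> < ratio (snd p)}"
    by (rule measure_Un_le) simp_all
  also have "measure_pmf.prob (component c n) {p. real n * \<gamma> < ratio (snd p)}
      = measure_pmf.prob (map_pmf snd (component c n)) {y. real n * \<gamma> < ratio y}"
    by (simp add: measure_map_pmf vimage_def)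
  also have "\<dots> \<le> 2 powr (- (real n * \<gamma>))"
    unfolding ratio_def by (rule prob_log_ratio_gt_le)
  finally show ?thesis by simp
qed

lemma prob_cond_tail_high_tendsto_0:
  assumes i: "i < m" and l: "l < mm i" and g: "\<gamma> > 0" and eps: "0 < \<epsilon>"
  shows "(\<lambda>n. measure_pmf.prob (PX i n) {x. \<epsilon> / 2 \<le> measure_pmf.prob (W i l n x)
    {y. real n * (Hmax i + \<gamma>) < self_info (mix n) (x, y)}}) \<longlonglongrightarrow> 0"
proof (rule prob_tendsto_0_bound)
  define Q where "Q n p \<longleftrightarrow> real n * (Hmax i + \<gamma>) < self_info (mix n) p" for n p
  define c where "c = (i, l)"
  have c: "c \<in> C" "H_comp c \<le> Hmax i" using i l H_comp_le_Hmax by (simp_all add: mem_C c_def)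
  define g where "g n = (measure_pmf.prob (component c n) {p. H_comp c + \<gamma> / 3 < Zfun (component c) n p}
    + 2 powr (- (real n * (\<gamma> / 3)))) / (\<epsilon> / 2)" for n
  show "g \<longlonglongrightarrow> 0"
    unfolding g_def using g eps
    by (intro tendsto_divide_zero tendsto_add_zero H_comp_concentration(2)[OF c(1)] tendsto_powr_neg_mult) auto
  have "eventually (\<lambda>n. log 2 (1 / wt c) \<le> real n * (\<gamma> / 3)) sequentially"
    using g by (intro eventually_le_linear) auto
  with eventually_ge_at_top[of 1]
  show "eventually (\<lambda>n. measure_pmf.prob (PX i n) {x. \<epsilon> / 2 \<le> measure_pmf.prob (W i l n x)
      {y. real n * (Hmax i + \<gamma>) < self_info (mix n) (x, y)}} \<le> g n) sequentially"
  proof eventually_elim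
    case (elim n)
    have "real n * (H_comp c + 3 * (\<gamma> / 3)) \<le> real n * (Hmax i + \<gamma>)"
      using c(2) by (intro mult_left_mono) auto
    then have "{p. Q n p} \<subseteq> {p. real n * (H_comp c + 3 * (\<gamma> / 3)) < self_info (mix n) p}"
      unfolding Q_def by auto
    then have "measure_pmf.prob (component c n) {p. Q n p}
        \<le> measure_pmf.prob (component c n) {p. real n * (H_comp c + 3 * (\<gamma> / 3)) < self_info (mix n) p}"
      by (rule measure_pmf.finite_measure_mono) simp
    also have "\<dots> \<le> g n * (\<epsilon> / 2)"
      using prob_self_info_mix_high_le[OF c(1) elim] eps by (simp add: g_def)
    finally have "measure_pmf.prob (component c n) {p. Q n p} / (\<epsilon> / 2) \<le> g n"
      using eps by (simp add: pos_divide_le_eq)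
    moreover have "measure_pmf.prob (PX i n) {x. \<epsilon> / 2 \<le> measure_pmf.prob (W i l n x) {y. Q n (x, y)}}
        \<le> measure_pmf.prob (component c n) {p. Q n p} / (\<epsilon> / 2)"
      using prob_cond_prob_ge_le[of "\<epsilon> / 2" "PX i" n "W i l" "Q n"] eps
      by (simp add: component_def c_def)
    ultimately show ?case by (simp add: Q_def)
  qed
qed

lemma prob_not_good_upper_tendsto_0:
  assumes i: "i < m" and g: "\<gamma> > 0" and eps: "0 < \<epsilon>"
  shows "(\<lambda>n. measure_pmf.prob (PX i n) {x. x \<notin> good_upper \<gamma> \<epsilon> n i}) \<longlonglongrightarrow> 0"
proof -
  define B where "B l n = {x. \<epsilon> / 2 \<le> measure_pmf.prob (W i l n x)
    {y. real n * (Hmax i + \<gamma>) < self_info (mix n) (x, y)}}" for l n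
  have "(\<lambda>n. measure_pmf.prob (PX i n) (\<Union>l\<in>{..<mm i}. B l n)) \<longlonglongrightarrow> 0"
    unfolding B_def using prob_cond_tail_high_tendsto_0[OF i _ g eps] by (intro prob_tendsto_0_UN) simp_all
  then have "(\<lambda>n. measure_pmf.prob (PX i n) ({x. \<not> dominant n i x} \<union> (\<Union>l\<in>{..<mm i}. B l n))) \<longlonglongrightarrow> 0"
    by (rule prob_tendsto_0_Un[OF prob_not_dominant_tendsto_0[OF i]])
  moreover have "{x. x \<notin> good_upper \<gamma> \<epsilon> n i} \<subseteq> {x. \<not> dominant n i x} \<union> (\<Union>l\<in>{..<mm i}. B l n)" for n
    by (auto simp: good_upper_def B_def not_le dest: less_imp_le)
  ultimately show ?thesis by (rule prob_tendsto_0_subset)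
qed
definition good :: "real \<Rightarrow> real \<Rightarrow> nat \<Rightarrow> 'x list set" where
  "good \<gamma> \<epsilon> n = {x. \<exists>i<m. x \<in> good_upper \<gamma> \<epsilon> n i}"

definition bad_Zfun :: "real \<Rightarrow> real \<Rightarrow> nat \<times> nat \<Rightarrow> nat \<Rightarrow> ennreal" where
  "bad_Zfun \<gamma> \<epsilon> c n = (\<integral>\<^sup>+p. ennreal (Zfun (component c) n p) * indicator {p. fst p \<notin> good \<gamma> \<epsilon> n} p
     \<partial>measure_pmf (component c n))"

lemma bad_Zfun_tendsto_0:
  assumes c: "c \<in> C" and g: "\<gamma> > 0" and eps: "0 < \<epsilon>"
  shows "bad_Zfun \<gamma> \<epsilon> c \<longlonglongrightarrow> 0"
  unfolding bad_Zfun_def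
proof (rule uniformly_integrable_vanishing_sets[OF component_uniformly_integrable[OF c]])
  have k: "fst c < m" using c by (simp add: mem_C)
  have "measure_pmf.prob (component c n) {p. fst p \<notin> good \<gamma> \<epsilon> n} =
      measure_pmf.prob (PX (fst c) n) {x. x \<notin> good \<gamma> \<epsilon> n}" for n
    using measure_map_pmf[of fst "component c n" "{x. x \<notin> good \<gamma> \<epsilon> n}"]
    by (simp add: component_def map_fst_joint_src vimage_def)
  moreover have "(\<lambda>n. measure_pmf.prob (PX (fst c) n) {x. x \<notin> good \<gamma> \<epsilon> n}) \<longlonglongrightarrow> 0"
    using k by (intro prob_tendsto_0_subset[OF prob_not_good_upper_tendsto_0[OF k g eps]]) (auto simp: good_def)
  ultimately show "(\<lambda>n. measure_pmf.prob (component c n) {p. fst p \<notin> good \<gamma> \<epsilon> n}) \<longlonglongrightarrow> 0"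
    by simp
qed

lemma pmf_mult_hbar_good_le:
  assumes eps: "0 < \<epsilon>" "\<epsilon> < 1" and k: "k < m" and g: "\<gamma> > 0" and x: "x \<in> good \<gamma> \<epsilon> n"
    and small: "\<forall>i<m. 2 powr (- (real n * \<delta>)) \<le> \<epsilon> * wt_row i / 2"
  shows "pmf (PX k n) x * hbar (mix n) \<epsilon> x \<le> pmf (PX k n) x * (real n * (Hmax k + \<gamma>))
    + (\<Sum>i<m. 2 powr (- (real n * \<delta>)) * real n * (Hmax i + \<gamma>) * pmf (PX i n) x)"
proof -
  obtain i where i: "i < m" "x \<in> good_upper \<gamma> \<epsilon> n i" using x by (auto simp: good_def)
  have hb: "hbar (mix n) \<epsilon> x \<le> real n * (Hmax i + \<gamma>)"
    using hbar_upper_bound[OF eps i] small i(1) by blast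
  have nonneg: "0 \<le> 2 powr (- (real n * \<delta>)) * real n * (Hmax j + \<gamma>) * pmf (PX j n) x" if "j < m" for j
    using Hmax_nonneg[OF that] g by simp
  show ?thesis
  proof (cases "i = k")
    case True
    then show ?thesis using hb nonneg by (auto intro!: add_increasing2 sum_nonneg mult_left_mono)
  next
    case False
    have dom: "dominant n i x" using i by (simp add: good_upper_def)
    have "pmf (PX k n) x * hbar (mix n) \<epsilon> x \<le> pmf (PX k n) x * (real n * (Hmax i + \<gamma>))"
      using hb by (intro mult_left_mono) auto
    also have "\<dots> \<le> 2 powr (- (real n * \<delta>)) * pmf (PX i n) x * (real n * (Hmax i + \<gamma>))"
      using dominant_small[OF dom k] False Hmax_nonneg[OF i(1)] g by (intro mult_right_mono) auto
    also have "\<dots> \<le> (\<Sum>j<m. 2 powr (- (real n * \<delta>)) * real n * (Hmax j + \<gamma>) * pmf (PX j n) x)"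
      using member_le_sum[of i "{..<m}" "\<lambda>j. 2 powr (- (real n * \<delta>)) * real n * (Hmax j + \<gamma>) * pmf (PX j n) x"]
        nonneg i(1) by (simp add: mult_ac)
    finally show ?thesis using Hmax_nonneg[OF k] g by (simp add: add_increasing)
  qed
qed

lemma nn_integral_hbar_good_le:
  assumes eps: "0 < \<epsilon>" "\<epsilon> < 1" and k: "k < m" and g: "\<gamma> > 0"
    and small: "\<forall>i<m. 2 powr (- (real n * \<delta>)) \<le> \<epsilon> * wt_row i / 2"
  shows "(\<integral>\<^sup>+x. ennreal (hbar (mix n) \<epsilon> x) * indicator (good \<gamma> \<epsilon> n) x \<partial>measure_pmf (PX k n))
    \<le> ennreal (real n * (Hmax k + \<gamma>) + 2 powr (- (real n * \<delta>)) * real n * (\<Sum>i<m. Hmax i + \<gamma>))"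
proof -
  define b where "b i = 2 powr (- (real n * \<delta>)) * real n * (Hmax i + \<gamma>)" for i
  have b: "0 \<le> b i" if "i < m" for i using Hmax_nonneg[OF that] g by (simp add: b_def)
  have A: "0 \<le> real n * (Hmax k + \<gamma>)" using Hmax_nonneg[OF k] g by simp
  have "ennreal (pmf (PX k n) x) * (ennreal (hbar (mix n) \<epsilon> x) * indicator (good \<gamma> \<epsilon> n) x)
      \<le> ennreal (real n * (Hmax k + \<gamma>)) * ennreal (pmf (PX k n) x) + (\<Sum>i<m. ennreal (b i) * ennreal (pmf (PX i n) x))"
    for x
  proof (cases "x \<in> good \<gamma> \<epsilon> n")
    case True
    then have "0 \<le> hbar (mix n) \<epsilon> x"
      using eps by (intro hbar_nonneg pmf_map_fst_mix_pos) (auto simp: good_def good_upper_def dominant_def)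
    then have "ennreal (pmf (PX k n) x) * (ennreal (hbar (mix n) \<epsilon> x) * indicator (good \<gamma> \<epsilon> n) x)
        \<le> ennreal (pmf (PX k n) x * (real n * (Hmax k + \<gamma>)) + (\<Sum>i<m. b i * pmf (PX i n) x))"
      using pmf_mult_hbar_good_le[OF eps k g True small] True
      by (simp add: ennreal_mult[symmetric] ennreal_leI b_def mult_ac)
    also have "\<dots> = ennreal (pmf (PX k n) x * (real n * (Hmax k + \<gamma>))) + ennreal (\<Sum>i<m. b i * pmf (PX i n) x)"
      using A b by (intro ennreal_plus) (auto intro!: sum_nonneg)
    also have "ennreal (\<Sum>i<m. b i * pmf (PX i n) x) = (\<Sum>i<m. ennreal (b i) * ennreal (pmf (PX i n) x))"
      using b by (subst sum_ennreal[symmetric]) (auto intro!: sum.cong ennreal_mult)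
    also have "ennreal (pmf (PX k n) x * (real n * (Hmax k + \<gamma>)))
        = ennreal (real n * (Hmax k + \<gamma>)) * ennreal (pmf (PX k n) x)"
      using A by (subst ennreal_mult) (simp_all add: mult.commute)
    finally show ?thesis .
  qed simp
  then have "(\<integral>\<^sup>+x. ennreal (hbar (mix n) \<epsilon> x) * indicator (good \<gamma> \<epsilon> n) x \<partial>measure_pmf (PX k n))
      \<le> (\<integral>\<^sup>+x. ennreal (real n * (Hmax k + \<gamma>)) * ennreal (pmf (PX k n) x)
          + (\<Sum>i<m. ennreal (b i) * ennreal (pmf (PX i n) x)) \<partial>count_space UNIV)"
    unfolding nn_integral_measure_pmf by (intro nn_integral_mono) simp
  also have "\<dots> = ennreal (real n * (Hmax k + \<gamma>)) + (\<Sum>i<m. ennreal (b i))"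
    by (simp add: nn_integral_add nn_integral_sum nn_integral_cmult nn_integral_pmf_eq_1)
  also have "\<dots> = ennreal (real n * (Hmax k + \<gamma>) + (\<Sum>i<m. b i))"
    using A b by (subst ennreal_plus) (auto intro!: sum_nonneg sum_ennreal)
  also have "(\<Sum>i<m. b i) = 2 powr (- (real n * \<delta>)) * real n * (\<Sum>i<m. Hmax i + \<gamma>)"
    by (simp add: b_def sum_distrib_left)
  finally show ?thesis .
qed

lemma nn_integral_hbar_bad_le:
  assumes eps: "0 < \<epsilon>" "\<epsilon> < 1"
  shows "(\<integral>\<^sup>+x. ennreal (hbar (mix n) \<epsilon> x) * indicator (- good \<gamma> \<epsilon> n) x \<partial>measure_pmf (map_pmf fst (mix n)))
    \<le> ennreal (1 / \<epsilon>) * (\<integral>\<^sup>+p. ennreal (self_info (mix n) p) * indicator {p. fst p \<notin> good \<gamma> \<epsilon> n} p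
        \<partial>measure_pmf (mix n))"
proof -
  define h where "h p = ennreal (self_info (mix n) p) * indicator {p. fst p \<notin> good \<gamma> \<epsilon> n} p" for p
  have "ennreal (pmf (map_pmf fst (mix n)) x) * (ennreal (hbar (mix n) \<epsilon> x) * indicator (- good \<gamma> \<epsilon> n) x)
      \<le> ennreal (1 / \<epsilon>) * (\<integral>\<^sup>+p. indicator {p. fst p = x} p * h p \<partial>measure_pmf (mix n))" for x
  proof (cases "pmf (map_pmf fst (mix n)) x > 0 \<and> x \<notin> good \<gamma> \<epsilon> n")
    case True
    have "ennreal (pmf (map_pmf fst (mix n)) x) * (ennreal (hbar (mix n) \<epsilon> x) * indicator (- good \<gamma> \<epsilon> n) x)
        = ennreal (1 / \<epsilon>) * ennreal (\<epsilon> * pmf (map_pmf fst (mix n)) x * hbar (mix n) \<epsilon> x)"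
      using True eps hbar_nonneg[OF eps, of "mix n" x] by (simp add: ennreal_mult[symmetric])
    also have "\<dots> \<le> ennreal (1 / \<epsilon>) *
        (\<integral>\<^sup>+p. indicator {p. fst p = x} p * ennreal (self_info (mix n) p) \<partial>measure_pmf (mix n))"
      using hbar_markov_le[OF eps, of "mix n" x] True by (intro mult_left_mono) auto
    also have "(\<integral>\<^sup>+p. indicator {p. fst p = x} p * ennreal (self_info (mix n) p) \<partial>measure_pmf (mix n)) =
        (\<integral>\<^sup>+p. indicator {p. fst p = x} p * h p \<partial>measure_pmf (mix n))"
      using True by (intro nn_integral_cong) (auto simp: h_def indicator_def)
    finally show ?thesis .
  next
    case False
    then have "pmf (map_pmf fst (mix n)) x = 0 \<or> x \<in> good \<gamma> \<epsilon> n"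
      using pmf_nonneg[of "map_pmf fst (mix n)" x] by auto
    then show ?thesis by auto
  qed
  then have "(\<integral>\<^sup>+x. ennreal (hbar (mix n) \<epsilon> x) * indicator (- good \<gamma> \<epsilon> n) x \<partial>measure_pmf (map_pmf fst (mix n)))
      \<le> (\<integral>\<^sup>+x. ennreal (1 / \<epsilon>) * (\<integral>\<^sup>+p. indicator {p. fst p = x} p * h p \<partial>measure_pmf (mix n)) \<partial>count_space UNIV)"
    unfolding nn_integral_measure_pmf[of "map_pmf fst (mix n)"] by (intro nn_integral_mono)
  also have "\<dots> = ennreal (1 / \<epsilon>) * (\<integral>\<^sup>+p. h p \<partial>measure_pmf (mix n))"
    by (simp add: nn_integral_cmult nn_integral_fibres_fst)
  finally show ?thesis by (simp add: h_def)
qed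

definition mix_penalty :: "nat \<times> nat \<Rightarrow> real" where
  "mix_penalty c = log 2 (1 / wt c) + 1 / ln 2"

lemma mix_penalty_nonneg: "c \<in> C \<Longrightarrow> 0 \<le> mix_penalty c"
  using wt_pos[of c] wt_le_1[of c] by (simp add: mix_penalty_def)

lemma nn_integral_self_info_mix_bad_le:
  assumes n: "n \<ge> 1"
  shows "(\<integral>\<^sup>+p. ennreal (self_info (mix n) p) * indicator {p. fst p \<notin> good \<gamma> \<epsilon> n} p \<partial>measure_pmf (mix n))
    \<le> (\<Sum>c\<in>C. ennreal (wt c) * (ennreal (real n) * bad_Zfun \<gamma> \<epsilon> c n + ennreal (mix_penalty c)))"
  unfolding nn_integral_mix
proof (intro sum_mono mult_left_mono)
  fix c assume c: "c \<in> C"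
  have "ennreal (self_info (component c n) p) = ennreal (real n) * ennreal (Zfun (component c) n p)" for p
    using n by (simp add: Zfun_eq_self_info ennreal_mult[symmetric] self_info_nonneg)
  then have "(\<integral>\<^sup>+p. ennreal (self_info (component c n) p) * indicator {p. fst p \<notin> good \<gamma> \<epsilon> n} p
      \<partial>measure_pmf (component c n)) = ennreal (real n) * bad_Zfun \<gamma> \<epsilon> c n"
    unfolding bad_Zfun_def by (simp add: nn_integral_cmult mult.assoc)
  then show "(\<integral>\<^sup>+p. ennreal (self_info (mix n) p) * indicator {p. fst p \<notin> good \<gamma> \<epsilon> n} p \<partial>measure_pmf (component c n))
      \<le> ennreal (real n) * bad_Zfun \<gamma> \<epsilon> c n + ennreal (mix_penalty c)"
    using nn_integral_self_info_dominated_le[OF wt_pmf_component_le_pmf_mix wt_pos[OF c] wt_le_1,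
        of n "{p. fst p \<notin> good \<gamma> \<epsilon> n}"] wt_pos[OF c] wt_le_1[of c]
    by (simp add: mix_penalty_def ennreal_plus add.assoc)
qed simp

lemma nn_integral_hbar_good_mix_le:
  assumes eps: "0 < \<epsilon>" "\<epsilon> < 1" and g: "\<gamma> > 0"
    and small: "\<forall>i<m. 2 powr (- (real n * \<delta>)) \<le> \<epsilon> * wt_row i / 2"
  shows "(\<integral>\<^sup>+x. ennreal (hbar (mix n) \<epsilon> x) * indicator (good \<gamma> \<epsilon> n) x \<partial>measure_pmf (map_pmf fst (mix n)))
    \<le> ennreal (real n * (H_mix + \<gamma>) + 2 powr (- (real n * \<delta>)) * real n * (\<Sum>i<m. Hmax i + \<gamma>))"
proof -
  define K where "K = 2 powr (- (real n * \<delta>)) * real n * (\<Sum>i<m. Hmax i + \<gamma>)"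
  have "0 \<le> K" unfolding K_def using Hmax_nonneg g
    by (intro mult_nonneg_nonneg sum_nonneg) (auto intro: add_nonneg_nonneg less_imp_le)
  then have r: "0 \<le> real n * (Hmax (fst c) + \<gamma>) + K" if "c \<in> C" for c
    using that Hmax_nonneg[of "fst c"] g by (simp add: mem_C)
  have "(\<integral>\<^sup>+x. ennreal (hbar (mix n) \<epsilon> x) * indicator (good \<gamma> \<epsilon> n) x \<partial>measure_pmf (map_pmf fst (mix n)))
      \<le> (\<Sum>c\<in>C. ennreal (wt c) * ennreal (real n * (Hmax (fst c) + \<gamma>) + K))"
    unfolding nn_integral_map_fst_mix K_def
    by (intro sum_mono mult_left_mono nn_integral_hbar_good_le[OF eps _ g small]) (auto simp: mem_C)
  also have "\<dots> = ennreal (\<Sum>c\<in>C. wt c * (real n * (Hmax (fst c) + \<gamma>) + K))"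
    using r by (simp add: ennreal_mult wt_nonneg sum_nonneg flip: sum_ennreal)
  also have "(\<Sum>c\<in>C. wt c * (real n * (Hmax (fst c) + \<gamma>) + K)) = real n * (H_mix + \<gamma>) + K"
    unfolding H_mix_def sum_C_wt_fst[symmetric]
    by (simp add: algebra_simps sum.distrib sum_distrib_right[symmetric] sum_distrib_left[symmetric] sum_wt)
  finally show ?thesis by (simp add: K_def)
qed

lemma nn_integral_hbar_bad_mix_le:
  assumes eps: "0 < \<epsilon>" "\<epsilon> < 1" and n: "n \<ge> 1" and \<eta>: "0 \<le> \<eta>"
    and bad: "\<forall>c\<in>C. bad_Zfun \<gamma> \<epsilon> c n \<le> ennreal \<eta>"
  shows "(\<integral>\<^sup>+x. ennreal (hbar (mix n) \<epsilon> x) * indicator (- good \<gamma> \<epsilon> n) x \<partial>measure_pmf (map_pmf fst (mix n)))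
    \<le> ennreal ((real n * \<eta> + (\<Sum>c\<in>C. wt c * mix_penalty c)) / \<epsilon>)"
proof -
  have "(\<integral>\<^sup>+x. ennreal (hbar (mix n) \<epsilon> x) * indicator (- good \<gamma> \<epsilon> n) x \<partial>measure_pmf (map_pmf fst (mix n)))
      \<le> ennreal (1 / \<epsilon>) * (\<Sum>c\<in>C. ennreal (wt c) * (ennreal (real n) * bad_Zfun \<gamma> \<epsilon> c n + ennreal (mix_penalty c)))"
    using nn_integral_hbar_bad_le[OF eps] nn_integral_self_info_mix_bad_le[OF n]
    by (meson mult_left_mono order_trans zero_le)
  also have "\<dots> \<le> ennreal (1 / \<epsilon>) * (\<Sum>c\<in>C. ennreal (wt c) * (ennreal (real n) * ennreal \<eta> + ennreal (mix_penalty c)))"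
    using bad by (intro mult_left_mono sum_mono add_right_mono) auto
  also have "(\<Sum>c\<in>C. ennreal (wt c) * (ennreal (real n) * ennreal \<eta> + ennreal (mix_penalty c)))
      = (\<Sum>c\<in>C. ennreal (wt c * (real n * \<eta> + mix_penalty c)))"
    using \<eta> mix_penalty_nonneg wt_nonneg by (intro sum.cong refl) (simp add: ennreal_plus ennreal_mult)
  also have "\<dots> = ennreal (\<Sum>c\<in>C. wt c * (real n * \<eta> + mix_penalty c))"
    using \<eta> mix_penalty_nonneg wt_nonneg by (intro sum_ennreal) simp
  also have "ennreal (1 / \<epsilon>) * \<dots> = ennreal ((\<Sum>c\<in>C. wt c * (real n * \<eta> + mix_penalty c)) / \<epsilon>)"
    using eps \<eta> mix_penalty_nonneg wt_nonneg by (subst ennreal_mult[symmetric]) (auto intro!: sum_nonneg)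
  also have "(\<Sum>c\<in>C. wt c * (real n * \<eta> + mix_penalty c)) = real n * \<eta> + (\<Sum>c\<in>C. wt c * mix_penalty c)"
    by (simp add: distrib_left sum.distrib sum_distrib_right[symmetric] sum_wt)
  finally show ?thesis .
qed

lemma eventually_Hs_eps_upper:
  assumes eps: "0 < \<epsilon>" "\<epsilon> < 1" and g: "\<gamma> > 0"
  shows "eventually (\<lambda>n. ennreal (1 / real n) * Hs_eps mix \<epsilon> n \<le> ennreal (H_mix + 3 * \<gamma>)) sequentially"
proof -
  define K where "K = (\<Sum>i<m. Hmax i + \<gamma>)"
  define L where "L = (\<Sum>c\<in>C. wt c * mix_penalty c)"
  have "0 \<le> K" unfolding K_def using Hmax_nonneg g by (intro sum_nonneg) (auto intro: add_nonneg_nonneg less_imp_le)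
  have "0 \<le> L" unfolding L_def using mix_penalty_nonneg by (intro sum_nonneg) (auto simp: wt_nonneg)
  have "eventually (\<lambda>n. \<forall>i\<in>{..<m}. 2 powr (- (real n * \<delta>)) < \<epsilon> * wt_row i / 2) sequentially"
    using tendsto_powr_neg_mult[OF delta_pos] wt_row_pos eps
    by (intro eventually_ball_finite ballI order_tendstoD(2)) auto
  moreover have "0 < ennreal (\<epsilon> * \<gamma>)" using eps g by simp
  then have "eventually (\<lambda>n. bad_Zfun \<gamma> \<epsilon> c n < ennreal (\<epsilon> * \<gamma>)) sequentially" if "c \<in> C" for c
    by (rule order_tendstoD(2)[OF bad_Zfun_tendsto_0[OF that g eps(1)]])
  then have "eventually (\<lambda>n. \<forall>c\<in>C. bad_Zfun \<gamma> \<epsilon> c n < ennreal (\<epsilon> * \<gamma>)) sequentially"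
    by (intro eventually_ball_finite[OF finite_C]) auto
  moreover have "(\<lambda>n. 2 powr (- (real n * \<delta>)) * K + L / \<epsilon> * (1 / real n)) \<longlonglongrightarrow> 0 * K + L / \<epsilon> * 0"
    by (intro tendsto_intros tendsto_powr_neg_mult[OF delta_pos] lim_const_over_n[of 1, simplified])
  then have "eventually (\<lambda>n. 2 powr (- (real n * \<delta>)) * K + L / \<epsilon> * (1 / real n) < \<gamma>) sequentially"
    using g by (intro order_tendstoD(2)) auto
  ultimately show ?thesis using eventually_ge_at_top[of 1]
  proof eventually_elim
    case (elim n)
    have "Hs_eps mix \<epsilon> n \<le> ennreal (real n * (H_mix + \<gamma>) + 2 powr (- (real n * \<delta>)) * real n * K)
        + ennreal ((real n * (\<epsilon> * \<gamma>) + L) / \<epsilon>)"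
      unfolding Hs_eps_split[of mix \<epsilon> n "good \<gamma> \<epsilon> n"] using elim eps g unfolding K_def L_def
      by (intro add_mono nn_integral_hbar_good_mix_le nn_integral_hbar_bad_mix_le) (auto intro: less_imp_le)
    also have "\<dots> = ennreal (real n * (H_mix + \<gamma>) + 2 powr (- (real n * \<delta>)) * real n * K
        + (real n * (\<epsilon> * \<gamma>) + L) / \<epsilon>)"
      using eps g H_mix_nonneg \<open>0 \<le> K\<close> \<open>0 \<le> L\<close> by (intro ennreal_plus[symmetric]) auto
    also have "\<dots> \<le> ennreal (real n * (H_mix + 3 * \<gamma>))"
    proof (rule ennreal_leI)
      have "real n * (H_mix + \<gamma>) + 2 powr (- (real n * \<delta>)) * real n * K + (real n * (\<epsilon> * \<gamma>) + L) / \<epsilon>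
          = real n * (H_mix + 2 * \<gamma> + (2 powr (- (real n * \<delta>)) * K + L / \<epsilon> * (1 / real n)))"
        using elim(4) eps by (simp add: field_simps)
      also have "\<dots> \<le> real n * (H_mix + 3 * \<gamma>)"
        using elim(3) by (intro mult_left_mono) auto
      finally show "real n * (H_mix + \<gamma>) + 2 powr (- (real n * \<delta>)) * real n * K
          + (real n * (\<epsilon> * \<gamma>) + L) / \<epsilon> \<le> real n * (H_mix + 3 * \<gamma>)" .
    qed
    finally have "ennreal (1 / real n) * Hs_eps mix \<epsilon> n \<le> ennreal (1 / real n) * ennreal (real n * (H_mix + 3 * \<gamma>))"
      by (rule mult_left_mono) simp
    also have "\<dots> = ennreal (H_mix + 3 * \<gamma>)"
      using elim(4) H_mix_nonneg g by (simp flip: ennreal_mult)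
    finally show ?case .
  qed
qed

lemma limsup_Hs_eps_eq:
  assumes eps: "0 < \<epsilon>" "\<forall>c\<in>C. 2 * \<epsilon> < wt c"
  shows "limsup (\<lambda>n. ennreal (1 / real n) * Hs_eps mix \<epsilon> n) = ennreal H_mix"
proof (rule antisym)
  show "limsup (\<lambda>n. ennreal (1 / real n) * Hs_eps mix \<epsilon> n) \<le> ennreal H_mix"
  proof (rule ennreal_le_epsilon)
    fix e :: real assume e: "0 < e"
    have "limsup (\<lambda>n. ennreal (1 / real n) * Hs_eps mix \<epsilon> n) \<le> ennreal (H_mix + 3 * (e / 3))"
      using e by (intro Limsup_bounded eventually_Hs_eps_upper eps(1) epsilon_lt_1[OF eps(2,1)]) auto
    then show "limsup (\<lambda>n. ennreal (1 / real n) * Hs_eps mix \<epsilon> n) \<le> ennreal H_mix + ennreal e"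
      using H_mix_nonneg e by (simp add: ennreal_plus)
  qed
  show "ennreal H_mix \<le> limsup (\<lambda>n. ennreal (1 / real n) * Hs_eps mix \<epsilon> n)"
  proof (rule ennreal_le_epsilon)
    fix e :: real assume e: "0 < e"
    have "ennreal (H_mix - 2 * (e / 2)) \<le> liminf (\<lambda>n. ennreal (1 / real n) * Hs_eps mix \<epsilon> n)"
      using e by (intro Liminf_bounded eventually_Hs_eps_lower eps) auto
    also have "\<dots> \<le> limsup (\<lambda>n. ennreal (1 / real n) * Hs_eps mix \<epsilon> n)" by (rule Liminf_le_Limsup) simp
    finally have "ennreal (H_mix - e) + ennreal e \<le> limsup (\<lambda>n. ennreal (1 / real n) * Hs_eps mix \<epsilon> n) + ennreal e"
      by (intro add_right_mono) simp
    then show "ennreal H_mix \<le> limsup (\<lambda>n. ennreal (1 / real n) * Hs_eps mix \<epsilon> n) + ennreal e"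
      using ennreal_le_sub_plus[of e H_mix] e by (meson less_imp_le order_trans)
  qed
qed

lemma Hs_bar_mix: "Hs_bar mix = ennreal H_mix"
proof -
  define e0 where "e0 = Min (wt ` C) / 2"
  have "0 < Min (wt ` C)" using finite_C wt_pos set_pmf_not_empty[of \<alpha>] by (subst Min_gr_iff) auto
  then have "0 < e0" by (simp add: e0_def)
  moreover have "2 * \<epsilon> < wt c" if "\<epsilon> < e0" "c \<in> C" for \<epsilon> c
  proof -
    have "Min (wt ` C) \<le> wt c" using finite_C that(2) by (intro Min_le) auto
    then show ?thesis using that(1) by (simp add: e0_def)
  qed
  ultimately have "eventually (\<lambda>\<epsilon>. limsup (\<lambda>n. ennreal (1 / real n) * Hs_eps mix \<epsilon> n) = ennreal H_mix)
      (at_right (0::real))"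
    unfolding eventually_at_right_field by (blast intro: limsup_Hs_eps_eq)
  then have "((\<lambda>\<epsilon>. limsup (\<lambda>n. ennreal (1 / real n) * Hs_eps mix \<epsilon> n)) \<longlongrightarrow> ennreal H_mix) (at_right (0::real))"
    by (rule tendsto_eventually)
  then show ?thesis unfolding Hs_bar_def by (rule tendsto_Lim[rotated]) simp
qed

end

theorem corollary4:
  fixes m :: nat and mm :: "nat \<Rightarrow> nat"
    and PX :: "nat \<Rightarrow> nat \<Rightarrow> ('x::countable) list pmf"
    and W :: "nat \<Rightarrow> nat \<Rightarrow> nat \<Rightarrow> 'x list \<Rightarrow> ('y::countable) list pmf"
    and \<alpha> :: "(nat \<times> nat) pmf"
  assumes mm_pos: "\<forall>i<m. 0 < mm i"
    and alpha_supp: "set_pmf \<alpha> = {(i, j). i < m \<and> j < mm i}"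
    and PX_len: "\<forall>i<m. \<forall>n. set_pmf (PX i n) \<subseteq> {xs. length xs = n}"
    and PX_pos: "\<forall>i<m. \<forall>n xs. length xs = n \<longrightarrow> pmf (PX i n) xs > 0"
    and W_len: "\<forall>i<m. \<forall>j<mm i. \<forall>n xs. length xs = n \<longrightarrow>
                   set_pmf (W i j n xs) \<subseteq> {ys. length ys = n}"
    and UI: "\<forall>i<m. \<forall>j<mm i. src_uniformly_integrable (joint_src (PX i) (W i j))"
    and SC: "\<forall>i<m. \<forall>j<mm i. cond_strong_converse (joint_src (PX i) (W i j))"
    and D_pos: "\<forall>i<m. \<forall>k<m. i \<noteq> k \<longrightarrow> D_lower (PX i) (PX k) > 0"
  shows "Hs_bar (\<lambda>n. bind_pmf \<alpha> (\<lambda>(i, j). joint_src (PX i) (W i j) n))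
       = ennreal (\<Sum>i<m. (\<Sum>j<mm i. pmf \<alpha> (i, j)) *
            Max {cond_entropy_rate (joint_src (PX i) (W i j)) | j. j < mm i})"
proof -
  interpret mixture_source m mm PX W \<alpha>
    using mm_pos alpha_supp PX_len PX_pos UI SC D_pos by unfold_locales
  have "(\<lambda>n. bind_pmf \<alpha> (\<lambda>(i, j). joint_src (PX i) (W i j) n)) = mix"
    by (rule ext) (simp add: mix_def component_def case_prod_beta')
  moreover have "H_mix = (\<Sum>i<m. (\<Sum>j<mm i. pmf \<alpha> (i, j)) *
      Max {cond_entropy_rate (joint_src (PX i) (W i j)) | j. j < mm i})"
    by (simp add: H_mix_def wt_row_def Hmax_def H_comp_def component_def)
  ultimately show ?thesis using Hs_bar_mix by simp
qed

end
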